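(* Let $k$ be a commutative ring, $H$ a cocommutative Hopf algebra over $k$, $A$ a cleft right $H$-comodule algebra with commutative $B=A^{\mathrm{co}H}$, and regard $B$ as a left $H$-module algebra via $h\cdot b=t(h_{(1)})bu(h_{(2)})$. Then the following data define a subcategory $\mathcal{X}_A$ of $\mathcal{C}_A$ with the two objects $\mathbf{1},\mathbf{2}$: $\mathcal{X}_A(\mathbf{1},\mathbf{1})=Z^1(H,B)$; $\mathcal{X}_A(\mathbf{2},\mathbf{1})=\Omega_A$; $\mathcal{X}_A(\mathbf{2},\mathbf{2})=\{\omega\in\mathrm{Hom}(H,B):\omega\circ S\in Z^1(H,B)\}$; $\mathcal{X}_A(\mathbf{1},\mathbf{2})=\{t\circ S:t\in\Omega_A\}$.
   Context: $\Delta(h)=h_{(1)}\otimes h_{(2)}$, antipode $S$, $\rho(a)=a_{[0]}\otimes a_{[1]}$, $B=\{a:\rho(a)=a\otimes1\}$. $A$ is cleft: there is a convolution invertible $H$-colinear $t:H\to A$ (colinear: $\rho(t(h))=t(h_{(1)})\otimes h_{(2)}$), with convolution inverse $u$; convolution: $(f*g)(h)=f(h_{(1)})g(h_{(2)})$. The module algebra structure above is independent of $t$. $Z^1(H,B)$ is the set of convolution invertible $k$-linear $v:H\to B$ with $v(hk)=(h_{(1)}\cdot v(k))v(h_{(2)})$ for all $h,k$. $\Omega_A$ is the set of $H$-colinear algebra maps $H\to A$. $\mathcal{C}_A$: two objects $\mathbf{1},\mathbf{2}$; $\mathcal{C}_A(\mathbf{i},\mathbf{j})$ denotes morphisms $\mathbf{i}\to\mathbf{j}$,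 sets of $k$-linear maps $H\to A$: $\mathcal{C}_A(\mathbf{1},\mathbf{1})=\{v:\rho(v(h))=v(h)\otimes1\}=\mathrm{Hom}(H,B)$; $\mathcal{C}_A(\mathbf{2},\mathbf{1})=\{t:\rho(t(h))=t(h_{(1)})\otimes h_{(2)}\}$; $\mathcal{C}_A(\mathbf{1},\mathbf{2})=\{u:\rho(u(h))=u(h_{(2)})\otimes S(h_{(1)})\}$; $\mathcal{C}_A(\mathbf{2},\mathbf{2})=\{w:\rho(w(h))=w(h_{(2)})\otimes S(h_{(1)})h_{(3)}\}$ (which equals $\mathrm{Hom}(H,B)$ here since $H$ is cocommutative). Composite of $f:\mathbf{i}\to\mathbf{j}$ and $g:\mathbf{j}\to\mathbf{k}$ is $g*f$. *)

theory Defs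
  imports Complex_Main "HOL-Library.Function_Algebras"
begin

text \<open>An element of M (x) N is represented by a finite list of pairs (m,n), standing for the
formal sum of the simple tensors m (x) n (scalars are absorbed into the first factor).
Two such lists represent the same tensor iff the difference of the corresponding elements of
the free k-module on M x N lies in the k-submodule spanned by the bilinearity relations.\<close>

definition fsum :: "'x list \<Rightarrow> ('x \<Rightarrow> 'k::comm_ring_1)" where
  "fsum xs = (\<lambda>p. of_nat (count_list xs p))"

inductive_set tens2_rel ::
  "('k::comm_ring_1 \<Rightarrow> 'm::ab_group_add \<Rightarrow> 'm) \<Rightarrow> ('k \<Rightarrow> 'n::ab_group_add \<Rightarrow> 'n)
     \<Rightarrow> ('m \<times> 'n \<Rightarrow> 'k) set"
  for sM sN where
  zero: "0 \<in> tens2_rel sM sN"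
| addL: "fsum [(m + m', n)] - fsum [(m, n)] - fsum [(m', n)] \<in> tens2_rel sM sN"
| addR: "fsum [(m, n + n')] - fsum [(m, n)] - fsum [(m, n')] \<in> tens2_rel sM sN"
| smulL: "fsum [(sM r m, n)] - (\<lambda>p. r * fsum [(m, n)] p) \<in> tens2_rel sM sN"
| smulR: "fsum [(m, sN r n)] - (\<lambda>p. r * fsum [(m, n)] p) \<in> tens2_rel sM sN"
| add: "x \<in> tens2_rel sM sN \<Longrightarrow> y \<in> tens2_rel sM sN \<Longrightarrow> x + y \<in> tens2_rel sM sN"
| scale: "x \<in> tens2_rel sM sN \<Longrightarrow> (\<lambda>p. r * x p) \<in> tens2_rel sM sN"

inductive_set tens3_rel ::
  "('k::comm_ring_1 \<Rightarrow> 'm::ab_group_add \<Rightarrow> 'm) \<Rightarrow> ('k \<Rightarrow> 'n::ab_group_add \<Rightarrow> 'n)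
     \<Rightarrow> ('k \<Rightarrow> 'p::ab_group_add \<Rightarrow> 'p) \<Rightarrow> ('m \<times> 'n \<times> 'p \<Rightarrow> 'k) set"
  for sM sN sP where
  zero: "0 \<in> tens3_rel sM sN sP"
| add1: "fsum [(m + m', n, q)] - fsum [(m, n, q)] - fsum [(m', n, q)] \<in> tens3_rel sM sN sP"
| add2: "fsum [(m, n + n', q)] - fsum [(m, n, q)] - fsum [(m, n', q)] \<in> tens3_rel sM sN sP"
| add3: "fsum [(m, n, q + q')] - fsum [(m, n, q)] - fsum [(m, n, q')] \<in> tens3_rel sM sN sP"
| smul1: "fsum [(sM r m, n, q)] - (\<lambda>p. r * fsum [(m, n, q)] p) \<in> tens3_rel sM sN sP"
| smul2: "fsum [(m, sN r n, q)] - (\<lambda>p. r * fsum [(m, n, q)] p) \<in> tens3_rel sM sN sP"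
| smul3: "fsum [(m, n, sP r q)] - (\<lambda>p. r * fsum [(m, n, q)] p) \<in> tens3_rel sM sN sP"
| add: "x \<in> tens3_rel sM sN sP \<Longrightarrow> y \<in> tens3_rel sM sN sP \<Longrightarrow> x + y \<in> tens3_rel sM sN sP"
| scale: "x \<in> tens3_rel sM sN sP \<Longrightarrow> (\<lambda>p. r * x p) \<in> tens3_rel sM sN sP"

definition teq2 :: "('k::comm_ring_1 \<Rightarrow> 'm::ab_group_add \<Rightarrow> 'm) \<Rightarrow> ('k \<Rightarrow> 'n::ab_group_add \<Rightarrow> 'n)
     \<Rightarrow> ('m \<times> 'n) list \<Rightarrow> ('m \<times> 'n) list \<Rightarrow> bool" where
  "teq2 sM sN xs ys \<longleftrightarrow> (fsum xs - fsum ys) \<in> tens2_rel sM sN"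

definition teq3 :: "('k::comm_ring_1 \<Rightarrow> 'm::ab_group_add \<Rightarrow> 'm) \<Rightarrow> ('k \<Rightarrow> 'n::ab_group_add \<Rightarrow> 'n)
     \<Rightarrow> ('k \<Rightarrow> 'p::ab_group_add \<Rightarrow> 'p)
     \<Rightarrow> ('m \<times> 'n \<times> 'p) list \<Rightarrow> ('m \<times> 'n \<times> 'p) list \<Rightarrow> bool" where
  "teq3 sM sN sP xs ys \<longleftrightarrow> (fsum xs - fsum ys) \<in> tens3_rel sM sN sP"

definition tmult :: "('a::times \<times> 'b::times) list \<Rightarrow> ('a \<times> 'b) list \<Rightarrow> ('a \<times> 'b) list" where
  "tmult xs ys = concat (map (\<lambda>(a, b). map (\<lambda>(c, d). (a * c, b * d)) ys) xs)"

definition k_algebra :: "('k::comm_ring_1 \<Rightarrow> 'r::ring_1 \<Rightarrow> 'r) \<Rightarrow> bool" where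
  "k_algebra s \<longleftrightarrow> module s \<and> (\<forall>r x y. s r (x * y) = s r x * y \<and> s r (x * y) = x * s r y)"

definition D_left :: "('h \<Rightarrow> ('h \<times> 'h) list) \<Rightarrow> ('x \<Rightarrow> ('y \<times> 'h) list) \<Rightarrow> 'x \<Rightarrow> ('y \<times> 'h \<times> 'h) list" where
  "D_left \<Delta> \<rho> x = concat (map (\<lambda>(a, y). map (\<lambda>(y1, y2). (a, y1, y2)) (\<Delta> y)) (\<rho> x))"

definition D_right :: "('y \<Rightarrow> ('y \<times> 'h) list) \<Rightarrow> ('x \<Rightarrow> ('y \<times> 'h) list) \<Rightarrow> 'x \<Rightarrow> ('y \<times> 'h \<times> 'h) list" where
  "D_right \<rho>' \<rho> x = concat (map (\<lambda>(a, y). map (\<lambda>(a1, a2). (a1, a2, y)) (\<rho>' a)) (\<rho> x))"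

definition hopf_algebra ::
  "('k::comm_ring_1 \<Rightarrow> 'h::ring_1 \<Rightarrow> 'h) \<Rightarrow> ('h \<Rightarrow> ('h \<times> 'h) list) \<Rightarrow> ('h \<Rightarrow> 'k)
     \<Rightarrow> ('h \<Rightarrow> 'h) \<Rightarrow> bool" where
  "hopf_algebra sH \<Delta> \<epsilon> S \<longleftrightarrow>
     k_algebra sH \<and>
     \<comment> \<open>Delta is k-linear\<close>
     (\<forall>x y. teq2 sH sH (\<Delta> (x + y)) (\<Delta> x @ \<Delta> y)) \<and>
     (\<forall>r x. teq2 sH sH (\<Delta> (sH r x)) (map (\<lambda>(a, b). (sH r a, b)) (\<Delta> x))) \<and>
     \<comment> \<open>epsilon and S are k-linear\<close>
     module_hom sH ((*) :: 'k \<Rightarrow> 'k \<Rightarrow> 'k) \<epsilon> \<and>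
     module_hom sH sH S \<and>
     \<comment> \<open>coassociativity and counit\<close>
     (\<forall>h. teq3 sH sH sH (D_right \<Delta> \<Delta> h) (D_left \<Delta> \<Delta> h)) \<and>
     (\<forall>h. (\<Sum>(a, b)\<leftarrow>\<Delta> h. sH (\<epsilon> a) b) = h) \<and>
     (\<forall>h. (\<Sum>(a, b)\<leftarrow>\<Delta> h. sH (\<epsilon> b) a) = h) \<and>
     \<comment> \<open>Delta and epsilon are algebra maps\<close>
     (\<forall>x y. teq2 sH sH (\<Delta> (x * y)) (tmult (\<Delta> x) (\<Delta> y))) \<and>
     teq2 sH sH (\<Delta> 1) [(1, 1)] \<and>
     (\<forall>x y. \<epsilon> (x * y) = \<epsilon> x * \<epsilon> y) \<and> \<epsilon> 1 = 1 \<and>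
     \<comment> \<open>antipode\<close>
     (\<forall>h. (\<Sum>(a, b)\<leftarrow>\<Delta> h. S a * b) = sH (\<epsilon> h) 1) \<and>
     (\<forall>h. (\<Sum>(a, b)\<leftarrow>\<Delta> h. a * S b) = sH (\<epsilon> h) 1)"

definition cocommutative :: "('k::comm_ring_1 \<Rightarrow> 'h::ring_1 \<Rightarrow> 'h) \<Rightarrow> ('h \<Rightarrow> ('h \<times> 'h) list) \<Rightarrow> bool" where
  "cocommutative sH \<Delta> \<longleftrightarrow> (\<forall>h. teq2 sH sH (map prod.swap (\<Delta> h)) (\<Delta> h))"

definition right_comodule_algebra ::
  "('k::comm_ring_1 \<Rightarrow> 'a::ring_1 \<Rightarrow> 'a) \<Rightarrow> ('a \<Rightarrow> ('a \<times> 'h) list)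
     \<Rightarrow> ('k \<Rightarrow> 'h::ring_1 \<Rightarrow> 'h) \<Rightarrow> ('h \<Rightarrow> ('h \<times> 'h) list) \<Rightarrow> ('h \<Rightarrow> 'k) \<Rightarrow> bool" where
  "right_comodule_algebra sA \<rho> sH \<Delta> \<epsilon> \<longleftrightarrow>
     k_algebra sA \<and>
     (\<forall>x y. teq2 sA sH (\<rho> (x + y)) (\<rho> x @ \<rho> y)) \<and>
     (\<forall>r x. teq2 sA sH (\<rho> (sA r x)) (map (\<lambda>(a, b). (sA r a, b)) (\<rho> x))) \<and>
     (\<forall>a. teq3 sA sH sH (D_right \<rho> \<rho> a) (D_left \<Delta> \<rho> a)) \<and>
     (\<forall>a. (\<Sum>(x, h)\<leftarrow>\<rho> a. sA (\<epsilon> h) x) = a) \<and>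
     (\<forall>x y. teq2 sA sH (\<rho> (x * y)) (tmult (\<rho> x) (\<rho> y))) \<and>
     teq2 sA sH (\<rho> 1) [(1, 1)]"

definition coinv :: "('k::comm_ring_1 \<Rightarrow> 'a::ring_1 \<Rightarrow> 'a) \<Rightarrow> ('k \<Rightarrow> 'h::ring_1 \<Rightarrow> 'h)
     \<Rightarrow> ('a \<Rightarrow> ('a \<times> 'h) list) \<Rightarrow> 'a set" where
  "coinv sA sH \<rho> = {a. teq2 sA sH (\<rho> a) [(a, 1)]}"

definition conv :: "('h \<Rightarrow> ('h \<times> 'h) list) \<Rightarrow> ('h \<Rightarrow> 'a::ring_1) \<Rightarrow> ('h \<Rightarrow> 'a) \<Rightarrow> 'h \<Rightarrow> 'a" where
  "conv \<Delta> f g = (\<lambda>h. \<Sum>(x, y)\<leftarrow>\<Delta> h. f x * g y)"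

definition cunit :: "('k::comm_ring_1 \<Rightarrow> 'a::ring_1 \<Rightarrow> 'a) \<Rightarrow> ('h \<Rightarrow> 'k) \<Rightarrow> 'h \<Rightarrow> 'a" where
  "cunit sA \<epsilon> = (\<lambda>h. sA (\<epsilon> h) 1)"

definition HomHA :: "('k::comm_ring_1 \<Rightarrow> 'h::ring_1 \<Rightarrow> 'h) \<Rightarrow> ('k \<Rightarrow> 'a::ring_1 \<Rightarrow> 'a) \<Rightarrow> ('h \<Rightarrow> 'a) set" where
  "HomHA sH sA = {f. module_hom sH sA f}"

definition HomHB :: "('k::comm_ring_1 \<Rightarrow> 'h::ring_1 \<Rightarrow> 'h) \<Rightarrow> ('k \<Rightarrow> 'a::ring_1 \<Rightarrow> 'a)
     \<Rightarrow> ('a \<Rightarrow> ('a \<times> 'h) list) \<Rightarrow> ('h \<Rightarrow> 'a) set" where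
  "HomHB sH sA \<rho> = {f \<in> HomHA sH sA. \<forall>h. f h \<in> coinv sA sH \<rho>}"

definition colinear :: "('k::comm_ring_1 \<Rightarrow> 'a::ring_1 \<Rightarrow> 'a) \<Rightarrow> ('k \<Rightarrow> 'h::ring_1 \<Rightarrow> 'h)
     \<Rightarrow> ('a \<Rightarrow> ('a \<times> 'h) list) \<Rightarrow> ('h \<Rightarrow> ('h \<times> 'h) list) \<Rightarrow> ('h \<Rightarrow> 'a) \<Rightarrow> bool" where
  "colinear sA sH \<rho> \<Delta> t \<longleftrightarrow> (\<forall>h. teq2 sA sH (\<rho> (t h)) (map (\<lambda>(x, y). (t x, y)) (\<Delta> h)))"

definition act :: "('h \<Rightarrow> ('h \<times> 'h) list) \<Rightarrow> ('h \<Rightarrow> 'a::ring_1) \<Rightarrow> ('h \<Rightarrow> 'a) \<Rightarrow> 'h \<Rightarrow> 'a \<Rightarrow> 'a" where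
  "act \<Delta> t u h b = (\<Sum>(x, y)\<leftarrow>\<Delta> h. t x * b * u y)"

definition Z1 :: "('k::comm_ring_1 \<Rightarrow> 'h::ring_1 \<Rightarrow> 'h) \<Rightarrow> ('h \<Rightarrow> ('h \<times> 'h) list) \<Rightarrow> ('h \<Rightarrow> 'k)
     \<Rightarrow> ('k \<Rightarrow> 'a::ring_1 \<Rightarrow> 'a) \<Rightarrow> ('a \<Rightarrow> ('a \<times> 'h) list) \<Rightarrow> ('h \<Rightarrow> 'a) \<Rightarrow> ('h \<Rightarrow> 'a)
     \<Rightarrow> ('h \<Rightarrow> 'a) set" where
  "Z1 sH \<Delta> \<epsilon> sA \<rho> t u =
     {v \<in> HomHB sH sA \<rho>.
        (\<exists>w \<in> HomHB sH sA \<rho>. conv \<Delta> v w = cunit sA \<epsilon> \<and> conv \<Delta> w v = cunit sA \<epsilon>) \<and>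
        (\<forall>h k. v (h * k) = (\<Sum>(x, y)\<leftarrow>\<Delta> h. act \<Delta> t u x (v k) * v y))}"

definition OmegaA :: "('k::comm_ring_1 \<Rightarrow> 'h::ring_1 \<Rightarrow> 'h) \<Rightarrow> ('h \<Rightarrow> ('h \<times> 'h) list)
     \<Rightarrow> ('k \<Rightarrow> 'a::ring_1 \<Rightarrow> 'a) \<Rightarrow> ('a \<Rightarrow> ('a \<times> 'h) list) \<Rightarrow> ('h \<Rightarrow> 'a) set" where
  "OmegaA sH \<Delta> sA \<rho> =
     {f \<in> HomHA sH sA. f 1 = 1 \<and> (\<forall>x y. f (x * y) = f x * f y) \<and> colinear sA sH \<rho> \<Delta> f}"

datatype obj = One | Two

definition D3 :: "('h \<Rightarrow> ('h \<times> 'h) list) \<Rightarrow> 'h \<Rightarrow> ('h \<times> 'h \<times> 'h) list" where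
  "D3 \<Delta> h = concat (map (\<lambda>(x, y). map (\<lambda>(y1, y2). (x, y1, y2)) (\<Delta> y)) (\<Delta> h))"

text \<open>CA sH Delta S sA rho i j = C_A(i, j), the morphisms i -> j.\<close>
fun CA :: "('k::comm_ring_1 \<Rightarrow> 'h::ring_1 \<Rightarrow> 'h) \<Rightarrow> ('h \<Rightarrow> ('h \<times> 'h) list) \<Rightarrow> ('h \<Rightarrow> 'h)
     \<Rightarrow> ('k \<Rightarrow> 'a::ring_1 \<Rightarrow> 'a) \<Rightarrow> ('a \<Rightarrow> ('a \<times> 'h) list) \<Rightarrow> obj \<Rightarrow> obj \<Rightarrow> ('h \<Rightarrow> 'a) set" where
  "CA sH \<Delta> S sA \<rho> One One =
     {v \<in> HomHA sH sA. \<forall>h. teq2 sA sH (\<rho> (v h)) [(v h, 1)]}"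
| "CA sH \<Delta> S sA \<rho> Two One =
     {t \<in> HomHA sH sA. \<forall>h. teq2 sA sH (\<rho> (t h)) (map (\<lambda>(x, y). (t x, y)) (\<Delta> h))}"
| "CA sH \<Delta> S sA \<rho> One Two =
     {u \<in> HomHA sH sA. \<forall>h. teq2 sA sH (\<rho> (u h)) (map (\<lambda>(x, y). (u y, S x)) (\<Delta> h))}"
| "CA sH \<Delta> S sA \<rho> Two Two =
     {w \<in> HomHA sH sA. \<forall>h. teq2 sA sH (\<rho> (w h)) (map (\<lambda>(x, y, z). (w y, S x * z)) (D3 \<Delta> h))}"

fun XA :: "('k::comm_ring_1 \<Rightarrow> 'h::ring_1 \<Rightarrow> 'h) \<Rightarrow> ('h \<Rightarrow> ('h \<times> 'h) list) \<Rightarrow> ('h \<Rightarrow> 'k) \<Rightarrow> ('h \<Rightarrow> 'h)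
     \<Rightarrow> ('k \<Rightarrow> 'a::ring_1 \<Rightarrow> 'a) \<Rightarrow> ('a \<Rightarrow> ('a \<times> 'h) list) \<Rightarrow> ('h \<Rightarrow> 'a) \<Rightarrow> ('h \<Rightarrow> 'a)
     \<Rightarrow> obj \<Rightarrow> obj \<Rightarrow> ('h \<Rightarrow> 'a) set" where
  "XA sH \<Delta> \<epsilon> S sA \<rho> t u One One = Z1 sH \<Delta> \<epsilon> sA \<rho> t u"
| "XA sH \<Delta> \<epsilon> S sA \<rho> t u Two One = OmegaA sH \<Delta> sA \<rho>"
| "XA sH \<Delta> \<epsilon> S sA \<rho> t u Two Two = {\<omega> \<in> HomHB sH sA \<rho>. \<omega> \<circ> S \<in> Z1 sH \<Delta> \<epsilon> sA \<rho> t u}"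
| "XA sH \<Delta> \<epsilon> S sA \<rho> t u One Two = {t' \<circ> S | t'. t' \<in> OmegaA sH \<Delta> sA \<rho>}"

end

theory Submission
  imports Defs
begin

text \<open>
All computations are Sweedler sums over the list-valued comultiplication. The tensor identities
among the axioms (coassociativity, cocommutativity, multiplicativity of \<open>\<Delta>\<close> and \<open>\<rho>\<close>) become
identities between such sums through the universal property of the tensor product, phrased as
linearity modulo a submodule \<open>R\<close>: \<open>R = {0}\<close> yields equations in a module, \<open>R\<close> the tensor
relations yields equations in \<open>A \<otimes> H\<close>.

For \<open>\<omega> \<in> \<Omega>\<^sub>A\<close> the map \<open>\<gamma> = (\<omega> \<circ> S) * t\<close> takes values in \<open>B\<close> and \<open>t = \<omega> * \<gamma>\<close>, so
commutativity of \<open>B\<close> gives \<open>h \<cdot> b = \<omega>(h\<^sub>1) b \<omega>(S h\<^sub>2)\<close>: the action can be computed from any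
element of \<open>\<Omega>\<^sub>A\<close>. With this formula one checks that \<open>v * \<omega>\<close> and \<open>\<omega> * (v \<circ> S)\<close> lie in \<open>\<Omega>\<^sub>A\<close>
for \<open>v \<in> Z\<^sup>1\<close> and that \<open>\<omega> * (\<omega>' \<circ> S)\<close> is a cocycle; \<open>Z\<^sup>1\<close> is closed under convolution
because \<open>B\<close> is commutative. As \<open>H\<close> is cocommutative, \<open>S\<close> is an involutive anti-algebra map and a
coalgebra map, so \<open>f \<mapsto> f \<circ> S\<close> is an automorphism of the convolution algebra; it reduces every
composition in \<open>\<X>\<^sub>A\<close> to one of these four closure properties.
\<close>

definition submodule :: "('k::comm_ring_1 \<Rightarrow> 'r::ab_group_add \<Rightarrow> 'r) \<Rightarrow> 'r set \<Rightarrow> bool" where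
  "submodule sR R \<longleftrightarrow> module sR \<and> 0 \<in> R \<and> (\<forall>x\<in>R. \<forall>y\<in>R. x + y \<in> R) \<and> (\<forall>c. \<forall>x\<in>R. sR c x \<in> R)"

definition lin :: "('k::comm_ring_1 \<Rightarrow> 'x::ab_group_add \<Rightarrow> 'x) \<Rightarrow> ('k \<Rightarrow> 'r::ab_group_add \<Rightarrow> 'r) \<Rightarrow> ('x \<Rightarrow> 'r) \<Rightarrow> bool" where
  "lin sX sR f \<longleftrightarrow> (\<forall>x y. f (x + y) = f x + f y) \<and> (\<forall>c x. f (sX c x) = sR c (f x))"

text \<open>Maps into \<open>A \<otimes> H\<close> are represented by maps into formal sums, which are linear only modulo
the tensor relations.\<close>

definition lin_mod :: "('k::comm_ring_1 \<Rightarrow> 'x::ab_group_add \<Rightarrow> 'x) \<Rightarrow> ('k \<Rightarrow> 'r::ab_group_add \<Rightarrow> 'r) \<Rightarrow> 'r set \<Rightarrow> ('x \<Rightarrow> 'r) \<Rightarrow> bool" where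
  "lin_mod sX sR R f \<longleftrightarrow> (\<forall>x y. f (x + y) - (f x + f y) \<in> R) \<and> (\<forall>c x. f (sX c x) - sR c (f x) \<in> R)"

lemma submodule_module: "submodule sR R \<Longrightarrow> module sR" by (simp add: submodule_def)
lemma submodule_zero_mem: "submodule sR R \<Longrightarrow> 0 \<in> R" by (simp add: submodule_def)
lemma submodule_add: "submodule sR R \<Longrightarrow> x \<in> R \<Longrightarrow> y \<in> R \<Longrightarrow> x + y \<in> R" by (simp add: submodule_def)
lemma submodule_scale: "submodule sR R \<Longrightarrow> x \<in> R \<Longrightarrow> sR c x \<in> R" by (simp add: submodule_def)
lemma submodule_uminus: "submodule sR R \<Longrightarrow> x \<in> R \<Longrightarrow> - x \<in> R"
  using submodule_scale[of sR R x "-1"] module.scale_minus_left[of sR 1 x] submodule_module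
  by (metis module.scale_one)
lemma submodule_diff_trans: "submodule sR R \<Longrightarrow> a - b \<in> R \<Longrightarrow> b - c \<in> R \<Longrightarrow> a - c \<in> R"
  using submodule_add[of sR R "a - b" "b - c"] by simp
lemma submodule_diff_sym: "submodule sR R \<Longrightarrow> a - b \<in> R \<Longrightarrow> b - a \<in> R"
  using submodule_uminus[of sR R "a - b"] by simp
lemma submodule_diff_refl: "submodule sR R \<Longrightarrow> a - a \<in> R"
  by (simp add: submodule_zero_mem)
lemma submodule_diff_add: "submodule sR R \<Longrightarrow> a - b \<in> R \<Longrightarrow> c - d \<in> R \<Longrightarrow> (a + c) - (b + d) \<in> R"
  using submodule_add[of sR R "a - b" "c - d"] by (simp add: algebra_simps)
lemma submodule_diff_scale: "submodule sR R \<Longrightarrow> a - b \<in> R \<Longrightarrow> sR c a - sR c b \<in> R"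
  using submodule_scale[of sR R "a - b" c] module.scale_right_diff_distrib[of sR c a b] submodule_module
  by metis

lemma submodule_diff_sum_list: "submodule sR R \<Longrightarrow> (\<And>x. x \<in> set xs \<Longrightarrow> f x - g x \<in> R) \<Longrightarrow>
   sum_list (map f xs) - sum_list (map g xs) \<in> R"
proof (induction xs)
  case Nil then show ?case by (simp add: submodule_zero_mem)
next
  case (Cons a xs)
  then show ?case using submodule_diff_add[of sR R "f a" "g a" "sum_list (map f xs)" "sum_list (map g xs)"] by simp
qed

lemma submodule_zero: "module sR \<Longrightarrow> submodule sR {0}"
  by (auto simp: submodule_def module.scale_zero_right)

lemma module_scale_sum_list: "module sR \<Longrightarrow> sR c (sum_list (map f xs)) = sum_list (map (\<lambda>x. sR c (f x)) xs)"
  by (induction xs) (auto simp: module.scale_right_distrib module.scale_zero_right)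

lemma lin_mod_zero: "lin_mod sX sR R f \<Longrightarrow> submodule sR R \<Longrightarrow> f 0 \<in> R"
proof -
  assume a: "lin_mod sX sR R f" "submodule sR R"
  have "f (0 + 0) - (f 0 + f 0) \<in> R" using a(1) unfolding lin_mod_def by blast
  then have "- f 0 \<in> R" by simp
  then show ?thesis using submodule_uminus[OF a(2), of "- f 0"] by simp
qed

lemma lin_mod_sum_list: "lin_mod sX sR R f \<Longrightarrow> submodule sR R \<Longrightarrow>
   f (sum_list (map g xs)) - sum_list (map (\<lambda>x. f (g x)) xs) \<in> R"
proof (induction xs)
  case Nil then show ?case using lin_mod_zero by simp
next
  case (Cons a xs)
  have "f (g a + sum_list (map g xs)) - (f (g a) + f (sum_list (map g xs))) \<in> R"
    using Cons.prems unfolding lin_mod_def by blast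
  moreover have "(f (g a) + f (sum_list (map g xs))) - (f (g a) + sum_list (map (\<lambda>x. f (g x)) xs)) \<in> R"
    using submodule_diff_add[OF Cons.prems(2) submodule_diff_refl[OF Cons.prems(2)] Cons.IH[OF Cons.prems]] .
  ultimately show ?case using submodule_diff_trans[OF Cons.prems(2)] by simp
qed

definition bilin_mod :: "('k::comm_ring_1 \<Rightarrow> 'm::ab_group_add \<Rightarrow> 'm) \<Rightarrow> ('k \<Rightarrow> 'n::ab_group_add \<Rightarrow> 'n)
   \<Rightarrow> ('k \<Rightarrow> 'r::ab_group_add \<Rightarrow> 'r) \<Rightarrow> 'r set \<Rightarrow> ('m \<Rightarrow> 'n \<Rightarrow> 'r) \<Rightarrow> bool" where
  "bilin_mod sM sN sR R \<phi> \<longleftrightarrow> (\<forall>n. lin_mod sM sR R (\<lambda>m. \<phi> m n)) \<and> (\<forall>m. lin_mod sN sR R (\<phi> m))"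

definition trilin_mod :: "('k::comm_ring_1 \<Rightarrow> 'm::ab_group_add \<Rightarrow> 'm) \<Rightarrow> ('k \<Rightarrow> 'n::ab_group_add \<Rightarrow> 'n)
   \<Rightarrow> ('k \<Rightarrow> 'p::ab_group_add \<Rightarrow> 'p)
   \<Rightarrow> ('k \<Rightarrow> 'r::ab_group_add \<Rightarrow> 'r) \<Rightarrow> 'r set \<Rightarrow> ('m \<Rightarrow> 'n \<Rightarrow> 'p \<Rightarrow> 'r) \<Rightarrow> bool" where
  "trilin_mod sM sN sP sR R \<phi> \<longleftrightarrow> (\<forall>n q. lin_mod sM sR R (\<lambda>m. \<phi> m n q)) \<and> (\<forall>m q. lin_mod sN sR R (\<lambda>n. \<phi> m n q))
     \<and> (\<forall>m n. lin_mod sP sR R (\<phi> m n))"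

lemma lin_mod_zero_iff: "lin_mod sX sR {0} f \<longleftrightarrow> lin sX sR f"
  by (simp add: lin_mod_def lin_def)

lemma bilin_mod_zero_iff: "bilin_mod sM sN sR {0} \<phi> \<longleftrightarrow> (\<forall>n. lin sM sR (\<lambda>m. \<phi> m n)) \<and> (\<forall>m. lin sN sR (\<phi> m))"
  by (simp add: bilin_mod_def lin_mod_zero_iff)

lemma trilin_mod_zero_iff: "trilin_mod sM sN sP sR {0} \<phi> \<longleftrightarrow> (\<forall>n q. lin sM sR (\<lambda>m. \<phi> m n q)) \<and> (\<forall>m q. lin sN sR (\<lambda>n. \<phi> m n q))
     \<and> (\<forall>m n. lin sP sR (\<phi> m n))"
  by (simp add: trilin_mod_def lin_mod_zero_iff)

definition eq_mod :: "'r::ab_group_add set \<Rightarrow> 'r \<Rightarrow> 'r \<Rightarrow> bool" where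
  "eq_mod R a b \<longleftrightarrow> a - b \<in> R"

lemma eq_mod_trans: "submodule sR R \<Longrightarrow> eq_mod R a b \<Longrightarrow> eq_mod R b c \<Longrightarrow> eq_mod R a c"
  unfolding eq_mod_def by (rule submodule_diff_trans)
lemma eq_mod_sym: "submodule sR R \<Longrightarrow> eq_mod R a b \<Longrightarrow> eq_mod R b a"
  unfolding eq_mod_def by (rule submodule_diff_sym)
lemma eq_mod_refl: "submodule sR R \<Longrightarrow> eq_mod R a a"
  unfolding eq_mod_def by (rule submodule_diff_refl)
lemma eq_mod_scale: "submodule sR R \<Longrightarrow> eq_mod R a b \<Longrightarrow> eq_mod R (sR c a) (sR c b)"
  unfolding eq_mod_def by (rule submodule_diff_scale)
lemma eq_mod_zero: "eq_mod {0} a b \<longleftrightarrow> a = b"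
  by (simp add: eq_mod_def)

definition lin_ext :: "('k::comm_ring_1 \<Rightarrow> 'r::ab_group_add \<Rightarrow> 'r) \<Rightarrow> ('p \<Rightarrow> 'r) \<Rightarrow> ('p \<Rightarrow> 'k) \<Rightarrow> 'r" where
  "lin_ext sR \<phi> F = (\<Sum>p\<in>{p. F p \<noteq> 0}. sR (F p) (\<phi> p))"

definition finite_supp :: "('p \<Rightarrow> 'k::comm_ring_1) \<Rightarrow> bool" where
  "finite_supp F \<longleftrightarrow> finite {p. F p \<noteq> 0}"

lemma lin_ext_superset:
  assumes "module sR" "finite A" "{p. F p \<noteq> 0} \<subseteq> A"
  shows "lin_ext sR \<phi> F = (\<Sum>p\<in>A. sR (F p) (\<phi> p))"
  unfolding lin_ext_def
  by (rule sum.mono_neutral_left) (use assms in \<open>auto simp: module.scale_zero_left\<close>)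

lemma finite_supp_add: "finite_supp F \<Longrightarrow> finite_supp G \<Longrightarrow> finite_supp (F + G)"
  unfolding finite_supp_def by (rule finite_subset[of _ "{p. F p \<noteq> 0} \<union> {p. G p \<noteq> 0}"]) auto
lemma finite_supp_diff: "finite_supp F \<Longrightarrow> finite_supp G \<Longrightarrow> finite_supp (F - G)"
  unfolding finite_supp_def by (rule finite_subset[of _ "{p. F p \<noteq> 0} \<union> {p. G p \<noteq> 0}"]) auto
lemma finite_supp_scale: "finite_supp F \<Longrightarrow> finite_supp (\<lambda>p. r * F p)"
  unfolding finite_supp_def by (rule finite_subset[of _ "{p. F p \<noteq> 0}"]) auto
lemma finite_supp_fsum: "finite_supp (fsum xs)"
  unfolding finite_supp_def fsum_def by (rule finite_subset[of _ "set xs"]) (auto, metis count_notin of_nat_0)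
lemma finite_supp_zero: "finite_supp 0" by (simp add: finite_supp_def)
lemma finite_supp_zero': "finite_supp (\<lambda>a. 0)" by (simp add: finite_supp_def)

lemma lin_ext_add: assumes "module sR" "finite_supp F" "finite_supp G"
  shows "lin_ext sR \<phi> (F + G) = lin_ext sR \<phi> F + lin_ext sR \<phi> G"
proof -
  let ?A = "{p. F p \<noteq> 0} \<union> {p. G p \<noteq> 0}"
  have fA: "finite ?A" using assms by (simp add: finite_supp_def)
  have "lin_ext sR \<phi> (F + G) = (\<Sum>p\<in>?A. sR ((F+G) p) (\<phi> p))"
    by (rule lin_ext_superset[OF assms(1) fA]) auto
  also have "\<dots> = (\<Sum>p\<in>?A. sR (F p) (\<phi> p)) + (\<Sum>p\<in>?A. sR (G p) (\<phi> p))"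
    by (simp add: module.scale_left_distrib[OF assms(1)] sum.distrib)
  also have "\<dots> = lin_ext sR \<phi> F + lin_ext sR \<phi> G"
    by (subst (1 2) lin_ext_superset[OF assms(1) fA]) auto
  finally show ?thesis .
qed

lemma lin_ext_scale: assumes "module sR" "finite_supp F"
  shows "lin_ext sR \<phi> (\<lambda>p. r * F p) = sR r (lin_ext sR \<phi> F)"
proof -
  let ?A = "{p. F p \<noteq> 0}"
  have fA: "finite ?A" using assms by (simp add: finite_supp_def)
  have "lin_ext sR \<phi> (\<lambda>p. r * F p) = (\<Sum>p\<in>?A. sR (r * F p) (\<phi> p))"
    by (rule lin_ext_superset[OF assms(1) fA]) auto
  also have "\<dots> = sR r (\<Sum>p\<in>?A. sR (F p) (\<phi> p))"
    by (simp add: module.scale_sum_right[OF assms(1)] module.scale_scale[OF assms(1)])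
  finally show ?thesis by (simp add: lin_ext_def)
qed

lemma lin_ext_diff: assumes "module sR" "finite_supp F" "finite_supp G"
  shows "lin_ext sR \<phi> (F - G) = lin_ext sR \<phi> F - lin_ext sR \<phi> G"
proof -
  have "F = (F - G) + G" by simp
  then have "lin_ext sR \<phi> F = lin_ext sR \<phi> (F - G) + lin_ext sR \<phi> G"
    by (metis lin_ext_add[OF assms(1) finite_supp_diff[OF assms(2,3)] assms(3)])
  then show ?thesis by simp
qed

lemma fsum_Nil: "fsum [] = 0" by (simp add: fsum_def fun_eq_iff)
lemma fsum_append: "fsum (xs @ ys) = fsum xs + fsum ys" by (simp add: fsum_def fun_eq_iff)
lemma fsum_Cons: "fsum (x # xs) = fsum [x] + fsum xs" using fsum_append[of "[x]" xs] by simp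
lemma fsum_concat: "fsum (concat xss) = sum_list (map fsum xss)"
  by (induction xss) (simp_all add: fsum_Nil fsum_append)

lemma lin_ext_single: assumes "module sR" shows "lin_ext sR \<phi> (fsum [x]) = \<phi> x"
proof -
  have "lin_ext sR \<phi> (fsum [x]) = (\<Sum>p\<in>{x}. sR (fsum [x] p) (\<phi> p))"
    by (rule lin_ext_superset[OF assms]) (auto simp: fsum_def)
  then show ?thesis by (simp add: fsum_def module.scale_one[OF assms])
qed

lemma lin_ext_fsum: assumes "module sR" shows "lin_ext sR \<phi> (fsum xs) = sum_list (map \<phi> xs)"
proof (induction xs)
  case Nil then show ?case by (simp add: fsum_Nil lin_ext_def)
next
  case (Cons a xs)
  then show ?case
    by (subst fsum_Cons) (simp add: lin_ext_add[OF assms finite_supp_fsum finite_supp_fsum] lin_ext_single[OF assms])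
qed

lemma lin_ext_fsum_diff3:
  assumes M: "module sR" and h: "\<phi> a - \<phi> b - \<phi> c \<in> R"
  shows "finite_supp (\<lambda>p. fsum [a] p - fsum [b] p - fsum [c] p) \<and> lin_ext sR \<phi> (\<lambda>p. fsum [a] p - fsum [b] p - fsum [c] p) \<in> R"
proof -
  have e: "(\<lambda>p. fsum [a] p - fsum [b] p - fsum [c] p) = fsum [a] - fsum [b] - fsum [c]" by (simp add: fun_eq_iff)
  show ?thesis unfolding e using h
    by (simp only: lin_ext_diff[OF M] finite_supp_diff finite_supp_fsum lin_ext_single[OF M])
qed

lemma lin_ext_fsum_diff_scale:
  assumes M: "module sR" and h: "\<phi> a - sR r (\<phi> b) \<in> R"
  shows "finite_supp (\<lambda>p. fsum [a] p - r * fsum [b] p) \<and> lin_ext sR \<phi> (\<lambda>p. fsum [a] p - r * fsum [b] p) \<in> R"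
proof -
  have e: "(\<lambda>p. fsum [a] p - r * fsum [b] p) = fsum [a] - (\<lambda>p. r * fsum [b] p)" by (simp add: fun_eq_iff)
  show ?thesis unfolding e using h
    by (simp only: lin_ext_diff[OF M] finite_supp_diff finite_supp_fsum finite_supp_scale lin_ext_scale[OF M] lin_ext_single[OF M])
qed

lemma tens2_rel_lin_ext:
  assumes R: "submodule sR R"
    and l1: "\<And>n. lin_mod sM sR R (\<lambda>m. \<phi> m n)" and l2: "\<And>m. lin_mod sN sR R (\<phi> m)"
    and x: "x \<in> tens2_rel sM sN"
  shows "finite_supp x \<and> lin_ext sR (case_prod \<phi>) x \<in> R"
proof -
  have M: "module sR" using R submodule_module by blast
  from x show ?thesis
  proof induction
    case zero then show ?case by (simp add: finite_supp_zero finite_supp_zero' lin_ext_def submodule_zero_mem[OF R])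
  next
    case (addL m m' n)
    show ?case unfolding fun_diff_def
      by (rule lin_ext_fsum_diff3[OF M]) (use l1[of n] in \<open>simp add: lin_mod_def diff_diff_eq\<close>)
  next
    case (addR m n n')
    show ?case unfolding fun_diff_def
      by (rule lin_ext_fsum_diff3[OF M]) (use l2[of m] in \<open>simp add: lin_mod_def diff_diff_eq\<close>)
  next
    case (smulL r m n)
    show ?case unfolding fun_diff_def
      by (rule lin_ext_fsum_diff_scale[OF M]) (use l1[of n] in \<open>simp add: lin_mod_def\<close>)
  next
    case (smulR m r n)
    show ?case unfolding fun_diff_def
      by (rule lin_ext_fsum_diff_scale[OF M]) (use l2[of m] in \<open>simp add: lin_mod_def\<close>)
  next
    case (add x y)
    have e: "(\<lambda>a. x a + y a) = x + y" by (simp add: fun_eq_iff)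
    have f: "finite_supp x" "finite_supp y" using add by blast+
    have "lin_ext sR (case_prod \<phi>) (x + y) = lin_ext sR (case_prod \<phi>) x + lin_ext sR (case_prod \<phi>) y"
      by (rule lin_ext_add[OF M f])
    then show ?case unfolding e using add finite_supp_add[OF f] submodule_add[OF R] by metis
  next
    case (scale x r)
    then show ?case using scale by (simp add: finite_supp_scale lin_ext_scale[OF M] submodule_scale[OF R])
  qed
qed

lemma teq2_sum_diff:
  assumes R: "submodule sR R"
    and l1: "\<And>n. lin_mod sM sR R (\<lambda>m. \<phi> m n)" and l2: "\<And>m. lin_mod sN sR R (\<phi> m)"
    and t: "teq2 sM sN xs ys"
  shows "(\<Sum>(a, b)\<leftarrow>xs. \<phi> a b) - (\<Sum>(a, b)\<leftarrow>ys. \<phi> a b) \<in> R"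
proof -
  have M: "module sR" using R submodule_module by blast
  have "lin_ext sR (case_prod \<phi>) (fsum xs - fsum ys) \<in> R"
    using tens2_rel_lin_ext[OF R l1 l2] t unfolding teq2_def by blast
  then show ?thesis by (simp add: lin_ext_diff[OF M finite_supp_fsum finite_supp_fsum] lin_ext_fsum[OF M])
qed

lemma tens3_rel_lin_ext:
  assumes R: "submodule sR R"
    and l1: "\<And>n q. lin_mod sM sR R (\<lambda>m. \<phi> m n q)" and l2: "\<And>m q. lin_mod sN sR R (\<lambda>n. \<phi> m n q)"
    and l3: "\<And>m n. lin_mod sP sR R (\<phi> m n)"
    and x: "x \<in> tens3_rel sM sN sP"
  shows "finite_supp x \<and> lin_ext sR (\<lambda>(m, n, q). \<phi> m n q) x \<in> R"
proof -
  have M: "module sR" using R submodule_module by blast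
  from x show ?thesis
  proof induction
    case zero then show ?case by (simp add: finite_supp_zero finite_supp_zero' lin_ext_def submodule_zero_mem[OF R])
  next
    case (add1 m m' n q)
    show ?case unfolding fun_diff_def
      by (rule lin_ext_fsum_diff3[OF M]) (use l1[of n q] in \<open>simp add: lin_mod_def diff_diff_eq\<close>)
  next
    case (add2 m n n' q)
    show ?case unfolding fun_diff_def
      by (rule lin_ext_fsum_diff3[OF M]) (use l2[of m q] in \<open>simp add: lin_mod_def diff_diff_eq\<close>)
  next
    case (add3 m n q q')
    show ?case unfolding fun_diff_def
      by (rule lin_ext_fsum_diff3[OF M]) (use l3[of m n] in \<open>simp add: lin_mod_def diff_diff_eq\<close>)
  next
    case (smul1 r m n q)
    show ?case unfolding fun_diff_def
      by (rule lin_ext_fsum_diff_scale[OF M]) (use l1[of n q] in \<open>simp add: lin_mod_def\<close>)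
  next
    case (smul2 m r n q)
    show ?case unfolding fun_diff_def
      by (rule lin_ext_fsum_diff_scale[OF M]) (use l2[of m q] in \<open>simp add: lin_mod_def\<close>)
  next
    case (smul3 m n r q)
    show ?case unfolding fun_diff_def
      by (rule lin_ext_fsum_diff_scale[OF M]) (use l3[of m n] in \<open>simp add: lin_mod_def\<close>)
  next
    case (add x y)
    have e: "(\<lambda>a. x a + y a) = x + y" by (simp add: fun_eq_iff)
    have f: "finite_supp x" "finite_supp y" using add by blast+
    have "lin_ext sR (\<lambda>p. case p of (m, n, q) \<Rightarrow> \<phi> m n q) (x + y) = lin_ext sR (\<lambda>p. case p of (m, n, q) \<Rightarrow> \<phi> m n q) x + lin_ext sR (\<lambda>p. case p of (m, n, q) \<Rightarrow> \<phi> m n q) y"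
      by (rule lin_ext_add[OF M f])
    then show ?case unfolding e using add finite_supp_add[OF f] submodule_add[OF R] by metis
  next
    case (scale x r)
    then show ?case using scale by (simp add: finite_supp_scale lin_ext_scale[OF M] submodule_scale[OF R])
  qed
qed

lemma teq3_sum_diff:
  assumes R: "submodule sR R"
    and l1: "\<And>n q. lin_mod sM sR R (\<lambda>m. \<phi> m n q)" and l2: "\<And>m q. lin_mod sN sR R (\<lambda>n. \<phi> m n q)"
    and l3: "\<And>m n. lin_mod sP sR R (\<phi> m n)"
    and t: "teq3 sM sN sP xs ys"
  shows "(\<Sum>(a, b, c)\<leftarrow>xs. \<phi> a b c) - (\<Sum>(a, b, c)\<leftarrow>ys. \<phi> a b c) \<in> R"
proof -
  have M: "module sR" using R submodule_module by blast
  have "lin_ext sR (\<lambda>(m, n, q). \<phi> m n q) (fsum xs - fsum ys) \<in> R"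
    using tens3_rel_lin_ext[OF R l1 l2 l3] t unfolding teq3_def by blast
  then show ?thesis by (simp add: lin_ext_diff[OF M finite_supp_fsum finite_supp_fsum] lin_ext_fsum[OF M])
qed

definition sw :: "('h \<Rightarrow> ('h \<times> 'h) list) \<Rightarrow> 'h \<Rightarrow> ('h \<Rightarrow> 'h \<Rightarrow> 'r::ab_group_add) \<Rightarrow> 'r" where
  "sw \<Delta> h \<phi> = (\<Sum>(a, b)\<leftarrow>\<Delta> h. \<phi> a b)"

lemma sum_list_concat_map: "sum_list (concat (map f xs)) = sum_list (map (\<lambda>x. sum_list (f x)) xs)"
  by (induction xs) auto

lemma sum_D_right: "(\<Sum>(a, b, c)\<leftarrow>D_right \<Delta> \<Delta> h. \<phi> a b c) = sw \<Delta> h (\<lambda>a y. sw \<Delta> a (\<lambda>a1 a2. \<phi> a1 a2 y))"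
  unfolding D_right_def sw_def sum_list_concat_map map_concat
  by (simp add: case_prod_beta' o_def)

lemma sum_D_left: "(\<Sum>(a, b, c)\<leftarrow>D_left \<Delta> \<Delta> h. \<phi> a b c) = sw \<Delta> h (\<lambda>a y. sw \<Delta> y (\<lambda>y1 y2. \<phi> a y1 y2))"
  unfolding D_left_def sw_def sum_list_concat_map map_concat
  by (simp add: case_prod_beta' o_def)

lemma sum_tmult: "(\<Sum>(a, b)\<leftarrow>tmult xs ys. \<phi> a b) = (\<Sum>(a, b)\<leftarrow>xs. \<Sum>(c, d)\<leftarrow>ys. \<phi> (a * c) (b * d))"
  unfolding tmult_def sum_list_concat_map map_concat
  by (simp add: case_prod_beta' o_def)

lemma sw_cong_mod: "submodule sR R \<Longrightarrow> (\<And>a b. \<phi> a b - \<psi> a b \<in> R) \<Longrightarrow> sw \<Delta> h \<phi> - sw \<Delta> h \<psi> \<in> R"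
  unfolding sw_def using submodule_diff_sum_list[of sR R "\<Delta> h" "case_prod \<phi>" "case_prod \<psi>"]
  by (simp add: case_prod_beta')

lemma sw_scale: "module sR \<Longrightarrow> sR c (sw \<Delta> h \<phi>) = sw \<Delta> h (\<lambda>a b. sR c (\<phi> a b))"
  unfolding sw_def by (simp add: module_scale_sum_list case_prod_beta')
lemma eq_mod_sw: "submodule sR R \<Longrightarrow> (\<And>a b. eq_mod R (\<phi> a b) (\<psi> a b)) \<Longrightarrow> eq_mod R (sw \<Delta> h \<phi>) (sw \<Delta> h \<psi>)"
  unfolding eq_mod_def by (rule sw_cong_mod)

lemma sum_list_swap: "(\<Sum>x\<leftarrow>xs. \<Sum>y\<leftarrow>ys. F x y) = (\<Sum>y\<leftarrow>ys. \<Sum>x\<leftarrow>xs. (F x y::'a::comm_monoid_add))"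
proof (induction xs)
  case (Cons a xs)
  have "(\<Sum>y\<leftarrow>ys. F a y + (\<Sum>x\<leftarrow>xs. F x y)) = (\<Sum>y\<leftarrow>ys. F a y) + (\<Sum>y\<leftarrow>ys. \<Sum>x\<leftarrow>xs. F x y)"
    by (rule sum_list_addf)
  then show ?case using Cons by simp
qed simp

lemma sw_swap: "sw \<Delta> x (\<lambda>a b. sw \<Delta> y (\<lambda>c d. F a b c d)) = sw \<Delta> y (\<lambda>c d. sw \<Delta> x (\<lambda>a b. F a b c d))"
proof -
  have "(\<Sum>p\<leftarrow>\<Delta> x. \<Sum>q\<leftarrow>\<Delta> y. (\<lambda>p q. case p of (a, b) \<Rightarrow> case q of (c, d) \<Rightarrow> F a b c d) p q)
     = (\<Sum>q\<leftarrow>\<Delta> y. \<Sum>p\<leftarrow>\<Delta> x. (\<lambda>p q. case p of (a, b) \<Rightarrow> case q of (c, d) \<Rightarrow> F a b c d) p q)"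
    by (rule sum_list_swap)
  then show ?thesis unfolding sw_def by (simp add: case_prod_beta')
qed

lemma sw_mult_const: "sw \<Delta> h \<phi> * c = sw \<Delta> h (\<lambda>a b. \<phi> a b * (c::'a::ring_1))"
  unfolding sw_def by (simp add: sum_list_mult_const case_prod_beta' o_def)
lemma sw_const_mult: "c * sw \<Delta> h \<phi> = sw \<Delta> h (\<lambda>a b. (c::'a::ring_1) * \<phi> a b)"
  unfolding sw_def by (simp add: sum_list_const_mult case_prod_beta' o_def)
lemma sw_cong: "(\<And>a b. \<phi> a b = \<psi> a b) \<Longrightarrow> sw \<Delta> h \<phi> = sw \<Delta> h \<psi>"
  by (simp add: sw_def)

lemma sw_swap3: "sw \<Delta> A (\<lambda>c d. sw \<Delta> B (\<lambda>e f. sw \<Delta> C (\<lambda>p q. F c d e f p q))) = sw \<Delta> C (\<lambda>p q. sw \<Delta> A (\<lambda>c d. sw \<Delta> B (\<lambda>e f. F c d e f p q)))"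
proof -
  have "sw \<Delta> A (\<lambda>c d. sw \<Delta> B (\<lambda>e f. sw \<Delta> C (\<lambda>p q. F c d e f p q))) = sw \<Delta> A (\<lambda>c d. sw \<Delta> C (\<lambda>p q. sw \<Delta> B (\<lambda>e f. F c d e f p q)))"
    by (intro sw_cong sw_swap)
  also have "\<dots> = sw \<Delta> C (\<lambda>p q. sw \<Delta> A (\<lambda>c d. sw \<Delta> B (\<lambda>e f. F c d e f p q)))"
    by (rule sw_swap)
  finally show ?thesis .
qed

lemma lin_sw_commute: "lin sX sR f \<Longrightarrow> f (sw \<Delta> h \<phi>) = sw \<Delta> h (\<lambda>a b. f (\<phi> a b))"
proof -
  assume f: "lin sX sR f"
  have "f (sum_list (map g xs)) = sum_list (map (\<lambda>x. f (g x)) xs)" for g and xs :: "'z list"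
  proof (induction xs)
    case Nil
    have "f (0 + 0) = f 0 + f 0" using f unfolding lin_def by blast
    then have "f 0 = 0" by simp
    then show ?case by simp
  next
    case (Cons a xs) then show ?case using f by (simp add: lin_def)
  qed
  then show ?thesis unfolding sw_def by (simp add: case_prod_beta')
qed

definition sw3 :: "('h \<Rightarrow> ('h \<times> 'h) list) \<Rightarrow> 'h \<Rightarrow> ('h \<Rightarrow> 'h \<Rightarrow> 'h \<Rightarrow> 'r::ab_group_add) \<Rightarrow> 'r" where
  "sw3 \<Delta> h F = sw \<Delta> h (\<lambda>a x. sw \<Delta> x (\<lambda>b c. F a b c))"
definition sw4 :: "('h \<Rightarrow> ('h \<times> 'h) list) \<Rightarrow> 'h \<Rightarrow> ('h \<Rightarrow> 'h \<Rightarrow> 'h \<Rightarrow> 'h \<Rightarrow> 'r::ab_group_add) \<Rightarrow> 'r" where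
  "sw4 \<Delta> h F = sw \<Delta> h (\<lambda>a x. sw3 \<Delta> x (\<lambda>b c d. F a b c d))"

lemma sw3_cong: "(\<And>a b c. F a b c = G a b c) \<Longrightarrow> sw3 \<Delta> h F = sw3 \<Delta> h G"
  by (simp add: sw3_def)
lemma sw4_cong: "(\<And>a b c d. F a b c d = G a b c d) \<Longrightarrow> sw4 \<Delta> h F = sw4 \<Delta> h G"
  by (simp add: sw4_def)

named_theorems linI

lemma lin_id[linI]: "lin sX sX (\<lambda>x. x)" by (simp add: lin_def)
lemma lin_add[linI]: "module sR \<Longrightarrow> lin sX sR f \<Longrightarrow> lin sX sR g \<Longrightarrow> lin sX sR (\<lambda>x. f x + g x)"
  by (simp add: lin_def module.scale_right_distrib)
lemma lin_zero[linI]: "module sR \<Longrightarrow> lin sX sR (\<lambda>x. 0)"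
  by (simp add: lin_def module.scale_zero_right)
lemma lin_scale[linI]: "module sR \<Longrightarrow> lin sX sR f \<Longrightarrow> lin sX sR (\<lambda>x. sR c (f x))"
  by (simp add: lin_def module.scale_right_distrib module.scale_left_commute)
lemma lin_scalar_arg[linI]: "lin sX (*) e \<Longrightarrow> module sR \<Longrightarrow> lin sX sR (\<lambda>x. sR (e x) c)"
  by (simp add: lin_def module.scale_left_distrib module.scale_scale)
lemma lin_mult_const[linI]: "k_algebra sR \<Longrightarrow> lin sX sR f \<Longrightarrow> lin sX sR (\<lambda>x. f x * c)"
  by (simp add: lin_def k_algebra_def distrib_right)
lemma lin_const_mult[linI]: "k_algebra sR \<Longrightarrow> lin sX sR f \<Longrightarrow> lin sX sR (\<lambda>x. c * f x)"
  unfolding lin_def k_algebra_def by (metis distrib_left)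
lemma lin_sw[linI]: "module sR \<Longrightarrow> (\<And>a b. lin sX sR (\<lambda>x. F x a b)) \<Longrightarrow> lin sX sR (\<lambda>x. sw \<Delta> h (F x))"
proof -
  assume M: "module sR" and F: "\<And>a b. lin sX sR (\<lambda>x. F x a b)"
  show ?thesis unfolding lin_def sw_def
  proof (intro conjI allI)
    fix x y show "(\<Sum>(a, b)\<leftarrow>\<Delta> h. F (x + y) a b) = (\<Sum>(a, b)\<leftarrow>\<Delta> h. F x a b) + (\<Sum>(a, b)\<leftarrow>\<Delta> h. F y a b)"
    proof -
      have "\<And>a b. F (x + y) a b = F x a b + F y a b" using F by (simp add: lin_def)
      then show ?thesis by (simp add: sum_list_addf case_prod_beta')
    qed
  next
    fix c x show "(\<Sum>(a, b)\<leftarrow>\<Delta> h. F (sX c x) a b) = sR c (\<Sum>(a, b)\<leftarrow>\<Delta> h. F x a b)"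
      using F by (simp add: module_scale_sum_list[OF M] lin_def case_prod_beta')
  qed
qed
lemma lin_comp: "lin sY sR f \<Longrightarrow> lin sX sY g \<Longrightarrow> lin sX sR (\<lambda>x. f (g x))"
  by (simp add: lin_def)
lemma lin_of_hom: "module_hom s1 s2 f \<Longrightarrow> lin s1 s2 f"
  by (simp add: lin_def module_hom_iff)
lemma lin_hom_comp: "module_hom sY sR f \<Longrightarrow> lin sX sY g \<Longrightarrow> lin sX sR (\<lambda>x. f (g x))"
  by (simp add: lin_def module_hom_iff)

named_theorems lin_modI

lemma lin_mod_comp: "lin_mod sY sR R f \<Longrightarrow> lin sX sY g \<Longrightarrow> lin_mod sX sR R (\<lambda>x. f (g x))"
  by (simp add: lin_mod_def lin_def)
lemma lin_mod_add[lin_modI]: "submodule sR R \<Longrightarrow> lin_mod sX sR R f \<Longrightarrow> lin_mod sX sR R g \<Longrightarrow> lin_mod sX sR R (\<lambda>x. f x + g x)"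
proof -
  assume R: "submodule sR R" and f: "lin_mod sX sR R f" and g: "lin_mod sX sR R g"
  have M: "module sR" using R submodule_module by blast
  show ?thesis unfolding lin_mod_def
  proof (intro conjI allI)
    fix x y
    have "(f (x + y) + g (x + y)) - ((f x + f y) + (g x + g y)) \<in> R"
      using f g submodule_diff_add[OF R] by (simp add: lin_mod_def)
    then show "f (x + y) + g (x + y) - (f x + g x + (f y + g y)) \<in> R" by (simp add: algebra_simps)
  next
    fix d x
    have "(f (sX d x) + g (sX d x)) - (sR d (f x) + sR d (g x)) \<in> R"
      using f g submodule_diff_add[OF R] by (simp add: lin_mod_def)
    then show "f (sX d x) + g (sX d x) - sR d (f x + g x) \<in> R" by (simp add: module.scale_right_distrib[OF M])
  qed
qed
lemma lin_mod_sw[lin_modI]: "submodule sR R \<Longrightarrow> (\<And>a b. lin_mod sX sR R (\<lambda>x. F x a b)) \<Longrightarrow> lin_mod sX sR R (\<lambda>x. sw \<Delta> h (F x))"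
proof -
  assume R: "submodule sR R" and F: "\<And>a b. lin_mod sX sR R (\<lambda>x. F x a b)"
  have M: "module sR" using R submodule_module by blast
  show ?thesis unfolding lin_mod_def
  proof (intro conjI allI)
    fix x y
    have "sw \<Delta> h (F (x + y)) - sw \<Delta> h (\<lambda>a b. F x a b + F y a b) \<in> R"
      by (rule sw_cong_mod[OF R]) (use F in \<open>simp add: lin_mod_def\<close>)
    moreover have "sw \<Delta> h (\<lambda>a b. F x a b + F y a b) = sw \<Delta> h (F x) + sw \<Delta> h (F y)"
      unfolding sw_def by (simp add: sum_list_addf case_prod_beta')
    ultimately show "sw \<Delta> h (F (x + y)) - (sw \<Delta> h (F x) + sw \<Delta> h (F y)) \<in> R" by simp
  next
    fix d x
    have "sw \<Delta> h (F (sX d x)) - sw \<Delta> h (\<lambda>a b. sR d (F x a b)) \<in> R"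
      by (rule sw_cong_mod[OF R]) (use F in \<open>simp add: lin_mod_def\<close>)
    then show "sw \<Delta> h (F (sX d x)) - sR d (sw \<Delta> h (F x)) \<in> R" by (simp add: sw_scale[OF M])
  qed
qed

lemma bilin_modI: "(\<And>n. lin_mod sM sR R (\<lambda>m. \<phi> m n)) \<Longrightarrow> (\<And>m. lin_mod sN sR R (\<phi> m)) \<Longrightarrow> bilin_mod sM sN sR R \<phi>"
  by (simp add: bilin_mod_def)
lemma trilin_modI: "(\<And>n q. lin_mod sM sR R (\<lambda>m. \<phi> m n q)) \<Longrightarrow> (\<And>m q. lin_mod sN sR R (\<lambda>n. \<phi> m n q))
     \<Longrightarrow> (\<And>m n. lin_mod sP sR R (\<phi> m n)) \<Longrightarrow> trilin_mod sM sN sP sR R \<phi>"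
  by (simp add: trilin_mod_def)

lemma bilin_mod_comp1: "bilin_mod sM sN sR R \<phi> \<Longrightarrow> lin sX sM g \<Longrightarrow> lin_mod sX sR R (\<lambda>x. \<phi> (g x) c)"
  unfolding bilin_mod_def using lin_mod_comp by blast
lemma bilin_mod_comp2: "bilin_mod sM sN sR R \<phi> \<Longrightarrow> lin sX sN g \<Longrightarrow> lin_mod sX sR R (\<lambda>x. \<phi> c (g x))"
  unfolding bilin_mod_def using lin_mod_comp by blast

lemma k_algebra_k: "k_algebra ((*) :: 'k::comm_ring_1 \<Rightarrow> 'k \<Rightarrow> 'k)"
  by (simp add: k_algebra_def module_def algebra_simps)
lemma module_k: "module ((*) :: 'k::comm_ring_1 \<Rightarrow> 'k \<Rightarrow> 'k)"
  by (simp add: module_def algebra_simps)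
lemma k_algebra_module: "k_algebra s \<Longrightarrow> module s" by (simp add: k_algebra_def)
lemma k_algebra_scale_one_mult: "k_algebra s \<Longrightarrow> s r 1 * x = s r x"
  by (metis k_algebra_def mult_1)
lemma k_algebra_mult_scale_one: "k_algebra s \<Longrightarrow> x * s r 1 = s r x"
  by (metis k_algebra_def mult_1_right)
lemma k_algebra_scale_mult_left: "k_algebra s \<Longrightarrow> s r x * y = s r (x * y)"
  by (simp add: k_algebra_def)
lemma k_algebra_scale_mult_right: "k_algebra s \<Longrightarrow> x * s r y = s r (x * y)"
  by (metis k_algebra_def)

section \<open>Hopf algebras\<close>

locale hopf =
  fixes sH :: "'k::comm_ring_1 \<Rightarrow> 'h::ring_1 \<Rightarrow> 'h"
    and \<Delta> :: "'h \<Rightarrow> ('h \<times> 'h) list" and \<epsilon> :: "'h \<Rightarrow> 'k" and S :: "'h \<Rightarrow> 'h"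
  assumes hopf: "hopf_algebra sH \<Delta> \<epsilon> S"
begin

lemma k_algebra_H: "k_algebra sH" using hopf by (simp add: hopf_algebra_def)
lemma module_H: "module sH" using k_algebra_H by (simp add: k_algebra_def)
lemma comult_add: "teq2 sH sH (\<Delta> (x + y)) (\<Delta> x @ \<Delta> y)" using hopf by (simp add: hopf_algebra_def)
lemma comult_scale: "teq2 sH sH (\<Delta> (sH r x)) (map (\<lambda>(a, b). (sH r a, b)) (\<Delta> x))" using hopf by (simp add: hopf_algebra_def)
lemma counit_lin: "module_hom sH (*) \<epsilon>" using hopf by (simp add: hopf_algebra_def)
lemma antipode_lin: "module_hom sH sH S" using hopf by (simp add: hopf_algebra_def)
lemma coassoc: "teq3 sH sH sH (D_right \<Delta> \<Delta> h) (D_left \<Delta> \<Delta> h)" using hopf by (simp add: hopf_algebra_def)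
lemma counitL: "(\<Sum>(a, b)\<leftarrow>\<Delta> h. sH (\<epsilon> a) b) = h" using hopf by (simp add: hopf_algebra_def)
lemma counitR: "(\<Sum>(a, b)\<leftarrow>\<Delta> h. sH (\<epsilon> b) a) = h" using hopf by (simp add: hopf_algebra_def)
lemma comult_mult: "teq2 sH sH (\<Delta> (x * y)) (tmult (\<Delta> x) (\<Delta> y))" using hopf by (simp add: hopf_algebra_def)
lemma comult_one: "teq2 sH sH (\<Delta> 1) [(1, 1)]" using hopf by (simp add: hopf_algebra_def)
lemma counit_mult: "\<epsilon> (x * y) = \<epsilon> x * \<epsilon> y" using hopf by (simp add: hopf_algebra_def)
lemma counit_one: "\<epsilon> 1 = 1" using hopf by (simp add: hopf_algebra_def)
lemma antipode_left: "(\<Sum>(a, b)\<leftarrow>\<Delta> h. S a * b) = sH (\<epsilon> h) 1" using hopf by (simp add: hopf_algebra_def)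
lemma antipode_right: "(\<Sum>(a, b)\<leftarrow>\<Delta> h. a * S b) = sH (\<epsilon> h) 1" using hopf by (simp add: hopf_algebra_def)

lemma sw_linm:
  assumes R: "submodule sR R" and \<phi>: "bilin_mod sH sH sR R \<phi>"
  shows "lin_mod sH sR R (\<lambda>h. sw \<Delta> h \<phi>)"
proof -
  have l1: "\<And>n. lin_mod sH sR R (\<lambda>m. \<phi> m n)" and l2: "\<And>m. lin_mod sH sR R (\<phi> m)"
    using \<phi> by (auto simp: bilin_mod_def)
  have M: "module sR" using R submodule_module by blast
  have A: "sw \<Delta> (x + y) \<phi> - (sw \<Delta> x \<phi> + sw \<Delta> y \<phi>) \<in> R" for x y
    using teq2_sum_diff[OF R l1 l2 comult_add[of x y]] by (simp add: sw_def)
  have B: "sw \<Delta> (sH c x) \<phi> - sR c (sw \<Delta> x \<phi>) \<in> R" for c x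
  proof -
    have 1: "sw \<Delta> (sH c x) \<phi> - sw \<Delta> x (\<lambda>a b. \<phi> (sH c a) b) \<in> R"
      using teq2_sum_diff[OF R l1 l2 comult_scale[of c x]]
      by (simp add: sw_def o_def case_prod_beta')
    have 2: "sw \<Delta> x (\<lambda>a b. \<phi> (sH c a) b) - sw \<Delta> x (\<lambda>a b. sR c (\<phi> a b)) \<in> R"
      by (rule sw_cong_mod[OF R]) (use l1 in \<open>auto simp: lin_mod_def\<close>)
    show ?thesis using submodule_diff_trans[OF R 1 2] by (simp add: sw_scale[OF M])
  qed
  show ?thesis using A B by (simp add: lin_mod_def)
qed

lemma sw_coassoc:
  assumes R: "submodule sR R" and \<phi>: "trilin_mod sH sH sH sR R \<phi>"
  shows "sw \<Delta> h (\<lambda>a y. sw \<Delta> a (\<lambda>a1 a2. \<phi> a1 a2 y)) - sw \<Delta> h (\<lambda>a y. sw \<Delta> y (\<lambda>y1 y2. \<phi> a y1 y2)) \<in> R"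
proof -
  have l1: "\<And>n q. lin_mod sH sR R (\<lambda>m. \<phi> m n q)" and l2: "\<And>m q. lin_mod sH sR R (\<lambda>n. \<phi> m n q)"
    and l3: "\<And>m n. lin_mod sH sR R (\<phi> m n)" using \<phi> by (auto simp: trilin_mod_def)
  show ?thesis using teq3_sum_diff[OF R l1 l2 l3 coassoc[of h]] by (simp add: sum_D_right sum_D_left)
qed

lemma sw_counitL:
  assumes R: "submodule sR R" and \<psi>: "lin_mod sH sR R \<psi>"
  shows "sw \<Delta> h (\<lambda>a b. sR (\<epsilon> a) (\<psi> b)) - \<psi> h \<in> R"
proof -
  have 1: "\<psi> h - sum_list (map (\<lambda>x. \<psi> (case x of (a, b) \<Rightarrow> sH (\<epsilon> a) b)) (\<Delta> h)) \<in> R"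
    using lin_mod_sum_list[OF \<psi> R, of "\<lambda>(a, b). sH (\<epsilon> a) b" "\<Delta> h"] counitL[of h] by simp
  have 2: "sum_list (map (\<lambda>x. \<psi> (case x of (a, b) \<Rightarrow> sH (\<epsilon> a) b)) (\<Delta> h)) - sw \<Delta> h (\<lambda>a b. sR (\<epsilon> a) (\<psi> b)) \<in> R"
    unfolding sw_def by (rule submodule_diff_sum_list[OF R]) (use \<psi> in \<open>auto simp: lin_mod_def\<close>)
  show ?thesis using submodule_diff_sym[OF R submodule_diff_trans[OF R 1 2]] .
qed

lemma sw_counitR:
  assumes R: "submodule sR R" and \<psi>: "lin_mod sH sR R \<psi>"
  shows "sw \<Delta> h (\<lambda>a b. sR (\<epsilon> b) (\<psi> a)) - \<psi> h \<in> R"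
proof -
  have 1: "\<psi> h - sum_list (map (\<lambda>x. \<psi> (case x of (a, b) \<Rightarrow> sH (\<epsilon> b) a)) (\<Delta> h)) \<in> R"
    using lin_mod_sum_list[OF \<psi> R, of "\<lambda>(a, b). sH (\<epsilon> b) a" "\<Delta> h"] counitR[of h] by simp
  have 2: "sum_list (map (\<lambda>x. \<psi> (case x of (a, b) \<Rightarrow> sH (\<epsilon> b) a)) (\<Delta> h)) - sw \<Delta> h (\<lambda>a b. sR (\<epsilon> b) (\<psi> a)) \<in> R"
    unfolding sw_def by (rule submodule_diff_sum_list[OF R]) (use \<psi> in \<open>auto simp: lin_mod_def\<close>)
  show ?thesis using submodule_diff_sym[OF R submodule_diff_trans[OF R 1 2]] .
qed

lemma sw_antipode_left:
  assumes R: "submodule sR R" and \<psi>: "lin_mod sH sR R \<psi>"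
  shows "sw \<Delta> h (\<lambda>a b. \<psi> (S a * b)) - sR (\<epsilon> h) (\<psi> 1) \<in> R"
proof -
  have 1: "\<psi> (sH (\<epsilon> h) 1) - sum_list (map (\<lambda>x. \<psi> (case x of (a, b) \<Rightarrow> S a * b)) (\<Delta> h)) \<in> R"
    using lin_mod_sum_list[OF \<psi> R, of "\<lambda>(a, b). S a * b" "\<Delta> h"] antipode_left[of h] by simp
  have 2: "\<psi> (sH (\<epsilon> h) 1) - sR (\<epsilon> h) (\<psi> 1) \<in> R" using \<psi> by (simp add: lin_mod_def)
  show ?thesis using submodule_diff_trans[OF R submodule_diff_sym[OF R 1] 2] by (simp add: sw_def case_prod_beta')
qed

lemma sw_antipode_right:
  assumes R: "submodule sR R" and \<psi>: "lin_mod sH sR R \<psi>"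
  shows "sw \<Delta> h (\<lambda>a b. \<psi> (a * S b)) - sR (\<epsilon> h) (\<psi> 1) \<in> R"
proof -
  have 1: "\<psi> (sH (\<epsilon> h) 1) - sum_list (map (\<lambda>x. \<psi> (case x of (a, b) \<Rightarrow> a * S b)) (\<Delta> h)) \<in> R"
    using lin_mod_sum_list[OF \<psi> R, of "\<lambda>(a, b). a * S b" "\<Delta> h"] antipode_right[of h] by simp
  have 2: "\<psi> (sH (\<epsilon> h) 1) - sR (\<epsilon> h) (\<psi> 1) \<in> R" using \<psi> by (simp add: lin_mod_def)
  show ?thesis using submodule_diff_trans[OF R submodule_diff_sym[OF R 1] 2] by (simp add: sw_def case_prod_beta')
qed

lemma sw_mult:
  assumes R: "submodule sR R" and \<phi>: "bilin_mod sH sH sR R \<phi>"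
  shows "sw \<Delta> (x * y) \<phi> - sw \<Delta> x (\<lambda>a b. sw \<Delta> y (\<lambda>c d. \<phi> (a * c) (b * d))) \<in> R"
proof -
  have l1: "\<And>n. lin_mod sH sR R (\<lambda>m. \<phi> m n)" and l2: "\<And>m. lin_mod sH sR R (\<phi> m)"
    using \<phi> by (auto simp: bilin_mod_def)
  show ?thesis using teq2_sum_diff[OF R l1 l2 comult_mult[of x y]] by (simp add: sw_def sum_tmult)
qed

lemma sw_one:
  assumes R: "submodule sR R" and \<phi>: "bilin_mod sH sH sR R \<phi>"
  shows "sw \<Delta> 1 \<phi> - \<phi> 1 1 \<in> R"
proof -
  have l1: "\<And>n. lin_mod sH sR R (\<lambda>m. \<phi> m n)" and l2: "\<And>m. lin_mod sH sR R (\<phi> m)"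
    using \<phi> by (auto simp: bilin_mod_def)
  show ?thesis using teq2_sum_diff[OF R l1 l2 comult_one] by (simp add: sw_def)
qed

lemma lin_sw_fun: "module sR \<Longrightarrow> (\<And>n. lin sH sR (\<lambda>m. \<phi> m n)) \<Longrightarrow> (\<And>m. lin sH sR (\<phi> m))
   \<Longrightarrow> lin sH sR (\<lambda>h. sw \<Delta> h \<phi>)"
  using sw_linm[of sR "{0}" \<phi>] submodule_zero[of sR] by (simp add: bilin_mod_zero_iff lin_mod_zero_iff)

lemma lin_antipode[linI]: "lin sX sH g \<Longrightarrow> lin sX sH (\<lambda>x. S (g x))"
  by (rule lin_hom_comp[OF antipode_lin])
lemma lin_counit[linI]: "lin sX sH g \<Longrightarrow> lin sX (*) (\<lambda>x. \<epsilon> (g x))"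
  by (rule lin_hom_comp[OF counit_lin])
lemma lin_sw_arg[linI]: "module sR \<Longrightarrow> (\<And>n. lin sH sR (\<lambda>m. \<phi> m n)) \<Longrightarrow> (\<And>m. lin sH sR (\<phi> m)) \<Longrightarrow> lin sX sH g
   \<Longrightarrow> lin sX sR (\<lambda>x. sw \<Delta> (g x) \<phi>)"
proof -
  assume a: "module sR" "\<And>n. lin sH sR (\<lambda>m. \<phi> m n)" "\<And>m. lin sH sR (\<phi> m)" "lin sX sH g"
  have "lin sH sR (\<lambda>h. sw \<Delta> h \<phi>)" by (rule lin_sw_fun) (use a hopf_axioms in auto)
  from lin_comp[OF this a(4)] show ?thesis .
qed

lemmas algebra_facts_H = k_algebra_H module_H k_algebra_k module_k

lemma sw_coassoc_eq:
  assumes "module sR" "\<And>b c. lin sH sR (\<lambda>a. \<phi> a b c)" "\<And>a c. lin sH sR (\<lambda>b. \<phi> a b c)" "\<And>a b. lin sH sR (\<phi> a b)"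
  shows "sw \<Delta> h (\<lambda>a y. sw \<Delta> a (\<lambda>a1 a2. \<phi> a1 a2 y)) = sw \<Delta> h (\<lambda>a y. sw \<Delta> y (\<lambda>y1 y2. \<phi> a y1 y2))"
  using sw_coassoc[OF submodule_zero[OF assms(1)], of \<phi> h] assms by (simp add: trilin_mod_zero_iff)

lemma sw_counitL_eq: "module sR \<Longrightarrow> lin sH sR \<psi> \<Longrightarrow> sw \<Delta> h (\<lambda>a b. sR (\<epsilon> a) (\<psi> b)) = \<psi> h"
  using sw_counitL[OF submodule_zero, of sR \<psi> h] by (simp add: lin_mod_zero_iff)
lemma sw_counitR_eq: "module sR \<Longrightarrow> lin sH sR \<psi> \<Longrightarrow> sw \<Delta> h (\<lambda>a b. sR (\<epsilon> b) (\<psi> a)) = \<psi> h"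
  using sw_counitR[OF submodule_zero, of sR \<psi> h] by (simp add: lin_mod_zero_iff)
lemma sw_antipode_left_eq: "module sR \<Longrightarrow> lin sH sR \<psi> \<Longrightarrow> sw \<Delta> h (\<lambda>a b. \<psi> (S a * b)) = sR (\<epsilon> h) (\<psi> 1)"
  using sw_antipode_left[OF submodule_zero, of sR \<psi> h] by (simp add: lin_mod_zero_iff)
lemma sw_antipode_right_eq: "module sR \<Longrightarrow> lin sH sR \<psi> \<Longrightarrow> sw \<Delta> h (\<lambda>a b. \<psi> (a * S b)) = sR (\<epsilon> h) (\<psi> 1)"
  using sw_antipode_right[OF submodule_zero, of sR \<psi> h] by (simp add: lin_mod_zero_iff)
lemma sw_mult_eq: "module sR \<Longrightarrow> (\<And>n. lin sH sR (\<lambda>m. \<phi> m n)) \<Longrightarrow> (\<And>m. lin sH sR (\<phi> m)) \<Longrightarrow>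
   sw \<Delta> (x * y) \<phi> = sw \<Delta> x (\<lambda>a b. sw \<Delta> y (\<lambda>c d. \<phi> (a * c) (b * d)))"
  using sw_mult[OF submodule_zero, of sR \<phi> x y] by (simp add: bilin_mod_zero_iff)
lemma sw_one_eq: "module sR \<Longrightarrow> (\<And>n. lin sH sR (\<lambda>m. \<phi> m n)) \<Longrightarrow> (\<And>m. lin sH sR (\<phi> m)) \<Longrightarrow>
   sw \<Delta> 1 \<phi> = \<phi> 1 1"
  using sw_one[OF submodule_zero, of sR \<phi>] by (simp add: bilin_mod_zero_iff)

lemma counit_antipode: "\<epsilon> (S h) = \<epsilon> h"
proof -
  have "\<epsilon> (S h) = sw \<Delta> h (\<lambda>a b. \<epsilon> b * \<epsilon> (S a))"
    by (rule sw_counitR_eq[symmetric]) (auto intro!: linI algebra_facts_H)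
  also have "\<dots> = sw \<Delta> h (\<lambda>a b. \<epsilon> (S a * b))"
    by (rule sw_cong) (simp add: counit_mult mult.commute)
  also have "\<dots> = \<epsilon> h * \<epsilon> 1"
    by (rule sw_antipode_left_eq) (auto intro!: linI algebra_facts_H)
  finally show ?thesis by (simp add: counit_one)
qed

lemma antipode_one: "S 1 = 1"
proof -
  have "sw \<Delta> 1 (\<lambda>a b. S a * b) = S 1 * 1"
    by (rule sw_one_eq) (auto intro!: linI algebra_facts_H)
  moreover have "sw \<Delta> 1 (\<lambda>a b. S a * b) = sH (\<epsilon> 1) 1" using antipode_left[of 1] by (simp add: sw_def)
  ultimately show ?thesis by (simp add: counit_one module.scale_one[OF module_H])
qed

lemma sw_antipode_prod:
  "sw \<Delta> x (\<lambda>a b. sw \<Delta> y (\<lambda>c d. S (a * c) * (b * d) * z)) = sH (\<epsilon> x * \<epsilon> y) z"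
proof -
  have "sH (\<epsilon> x * \<epsilon> y) 1 = sw \<Delta> (x * y) (\<lambda>a b. S a * b)"
    using antipode_left[of "x * y"] by (simp add: sw_def counit_mult)
  also have "\<dots> = sw \<Delta> x (\<lambda>a b. sw \<Delta> y (\<lambda>c d. S (a * c) * (b * d)))"
    by (rule sw_mult_eq) (auto intro!: linI algebra_facts_H)
  finally have "sH (\<epsilon> x * \<epsilon> y) 1 * z = sw \<Delta> x (\<lambda>a b. sw \<Delta> y (\<lambda>c d. S (a * c) * (b * d) * z))"
    by (simp add: sw_mult_const)
  then show ?thesis by (simp add: k_algebra_scale_one_mult[OF k_algebra_H])
qed

lemma sw_antipode_prod_cancel:
  "sw \<Delta> y (\<lambda>y1 y2. sw \<Delta> y1 (\<lambda>c d. S (a * c) * (b * d) * (S y2 * w))) = S (a * y) * b * w"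
proof -
  have "sw \<Delta> y (\<lambda>y1 y2. sw \<Delta> y1 (\<lambda>c d. S (a * c) * (b * d) * (S y2 * w)))
      = sw \<Delta> y (\<lambda>c z. sw \<Delta> z (\<lambda>d y2. S (a * c) * b * (d * S y2) * w))"
    by (subst sw_coassoc_eq) (auto intro!: linI algebra_facts_H simp: mult.assoc)
  also have "\<dots> = sw \<Delta> y (\<lambda>c z. sH (\<epsilon> z) (S (a * c) * b * 1 * w))"
    by (intro sw_cong sw_antipode_right_eq[where sR=sH and \<psi>="\<lambda>u. S (a * _) * b * u * w"])
      (auto intro!: linI algebra_facts_H)
  also have "\<dots> = S (a * y) * b * w"
    by (simp, rule sw_counitR_eq[where sR=sH]) (auto intro!: linI algebra_facts_H)
  finally show ?thesis .
qed

lemma antipode_mult: "S (x * y) = S y * S x"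
proof -
  have "S y * S x = sw \<Delta> x (\<lambda>a b. sH (\<epsilon> a) (S y * S b))"
    by (rule sw_counitL_eq[symmetric]) (auto intro!: linI algebra_facts_H)
  also have "\<dots> = sw \<Delta> x (\<lambda>x1 x2. sH (\<epsilon> x1) (sw \<Delta> y (\<lambda>y1 y2. sH (\<epsilon> y1) (S y2 * S x2))))"
  proof (rule sw_cong)
    fix a b show "sH (\<epsilon> a) (S y * S b) = sH (\<epsilon> a) (sw \<Delta> y (\<lambda>y1 y2. sH (\<epsilon> y1) (S y2 * S b)))"
      by (subst sw_counitL_eq) (auto intro!: linI algebra_facts_H)
  qed
  also have "\<dots> = sw \<Delta> x (\<lambda>x1 x2. sw \<Delta> y (\<lambda>y1 y2. sw \<Delta> x1 (\<lambda>a b. sw \<Delta> y1 (\<lambda>c d. S (a * c) * (b * d) * (S y2 * S x2)))))"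
    by (intro sw_cong) (simp add: sw_scale[OF module_H] module.scale_scale[OF module_H] sw_antipode_prod)
  also have "\<dots> = sw \<Delta> x (\<lambda>x1 x2. sw \<Delta> x1 (\<lambda>a b. sw \<Delta> y (\<lambda>y1 y2. sw \<Delta> y1 (\<lambda>c d. S (a * c) * (b * d) * (S y2 * S x2)))))"
    by (intro sw_cong sw_swap)
  also have "\<dots> = sw \<Delta> x (\<lambda>a w. sw \<Delta> w (\<lambda>b x2. sw \<Delta> y (\<lambda>y1 y2. sw \<Delta> y1 (\<lambda>c d. S (a * c) * (b * d) * (S y2 * S x2)))))"
    by (rule sw_coassoc_eq) (auto intro!: linI algebra_facts_H)
  also have "\<dots> = sw \<Delta> x (\<lambda>a w. sw \<Delta> w (\<lambda>b x2. S (a * y) * b * S x2))"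
    by (simp add: sw_antipode_prod_cancel)
  also have "\<dots> = sw \<Delta> x (\<lambda>a w. sH (\<epsilon> w) (S (a * y) * 1))"
  proof (rule sw_cong)
    fix a w
    have "sw \<Delta> w (\<lambda>b x2. S (a * y) * b * S x2) = sw \<Delta> w (\<lambda>b x2. S (a * y) * (b * S x2))"
      by (simp add: mult.assoc)
    also have "\<dots> = sH (\<epsilon> w) (S (a * y) * 1)"
      by (rule sw_antipode_right_eq[where sR=sH and \<psi>="\<lambda>u. S (a * y) * u"]) (auto intro!: linI algebra_facts_H)
    finally show "sw \<Delta> w (\<lambda>b x2. S (a * y) * b * S x2) = sH (\<epsilon> w) (S (a * y) * 1)" .
  qed
  also have "\<dots> = S (x * y)"
    by (simp, rule sw_counitR_eq[where sR=sH]) (auto intro!: linI algebra_facts_H)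
  finally show ?thesis ..
qed

lemma lin_mod_sw_arg[lin_modI]: "submodule sR R \<Longrightarrow> bilin_mod sH sH sR R \<phi> \<Longrightarrow> lin sX sH g \<Longrightarrow> lin_mod sX sR R (\<lambda>x. sw \<Delta> (g x) \<phi>)"
  using lin_mod_comp sw_linm by blast

lemma eq_mod_coassoc: "submodule sR R \<Longrightarrow> trilin_mod sH sH sH sR R \<phi> \<Longrightarrow>
  eq_mod R (sw \<Delta> h (\<lambda>a y. sw \<Delta> a (\<lambda>a1 a2. \<phi> a1 a2 y))) (sw \<Delta> h (\<lambda>a y. sw \<Delta> y (\<lambda>y1 y2. \<phi> a y1 y2)))"
  unfolding eq_mod_def by (rule sw_coassoc)
lemma eq_mod_counitL: "submodule sR R \<Longrightarrow> lin_mod sH sR R \<psi> \<Longrightarrow> eq_mod R (sw \<Delta> h (\<lambda>a b. sR (\<epsilon> a) (\<psi> b))) (\<psi> h)"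
  unfolding eq_mod_def by (rule sw_counitL)
lemma eq_mod_counitR: "submodule sR R \<Longrightarrow> lin_mod sH sR R \<psi> \<Longrightarrow> eq_mod R (sw \<Delta> h (\<lambda>a b. sR (\<epsilon> b) (\<psi> a))) (\<psi> h)"
  unfolding eq_mod_def by (rule sw_counitR)
lemma eq_mod_antipode_left: "submodule sR R \<Longrightarrow> lin_mod sH sR R \<psi> \<Longrightarrow> eq_mod R (sw \<Delta> h (\<lambda>a b. \<psi> (S a * b))) (sR (\<epsilon> h) (\<psi> 1))"
  unfolding eq_mod_def by (rule sw_antipode_left)
lemma eq_mod_antipode_right: "submodule sR R \<Longrightarrow> lin_mod sH sR R \<psi> \<Longrightarrow> eq_mod R (sw \<Delta> h (\<lambda>a b. \<psi> (a * S b))) (sR (\<epsilon> h) (\<psi> 1))"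
  unfolding eq_mod_def by (rule sw_antipode_right)
lemma eq_mod_mult: "submodule sR R \<Longrightarrow> bilin_mod sH sH sR R \<phi> \<Longrightarrow>
  eq_mod R (sw \<Delta> (x * y) \<phi>) (sw \<Delta> x (\<lambda>a b. sw \<Delta> y (\<lambda>c d. \<phi> (a * c) (b * d))))"
  unfolding eq_mod_def by (rule sw_mult)
lemma eq_mod_one: "submodule sR R \<Longrightarrow> bilin_mod sH sH sR R \<phi> \<Longrightarrow> eq_mod R (sw \<Delta> 1 \<phi>) (\<phi> 1 1)"
  unfolding eq_mod_def by (rule sw_one)

lemma sw_antipode_contract:
  assumes R: "submodule sR R" and \<Phi>: "bilin_mod sH sH sR R \<Phi>"
  shows "eq_mod R (sw \<Delta> x (\<lambda>g z. sw \<Delta> g (\<lambda>c d. sw \<Delta> z (\<lambda>e f. \<Phi> (c * S f) (d * S e))))) (sR (\<epsilon> x) (\<Phi> 1 1))"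
proof -
  note tr[trans] = eq_mod_trans[OF R]
  note l1 = bilin_mod_comp1[OF \<Phi>] and l2 = bilin_mod_comp2[OF \<Phi>]
  have "eq_mod R (sw \<Delta> x (\<lambda>g z. sw \<Delta> g (\<lambda>c d. sw \<Delta> z (\<lambda>e f. \<Phi> (c * S f) (d * S e)))))
     (sw \<Delta> x (\<lambda>c y. sw \<Delta> y (\<lambda>d z. sw \<Delta> z (\<lambda>e f. \<Phi> (c * S f) (d * S e)))))"
    by (rule eq_mod_coassoc[OF R]) (intro trilin_modI bilin_modI lin_modI R l1 l2 linI algebra_facts_H)+
  also have "eq_mod R \<dots> (sw \<Delta> x (\<lambda>c y. sw \<Delta> y (\<lambda>w f. sw \<Delta> w (\<lambda>d e. \<Phi> (c * S f) (d * S e)))))"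
    by (rule eq_mod_sw[OF R], rule eq_mod_sym[OF R], rule eq_mod_coassoc[OF R]) (intro trilin_modI bilin_modI lin_modI R l1 l2 linI algebra_facts_H)+
  also have "eq_mod R \<dots> (sw \<Delta> x (\<lambda>c y. sw \<Delta> y (\<lambda>w f. sR (\<epsilon> w) (\<Phi> (c * S f) 1))))"
    by (rule eq_mod_sw[OF R], rule eq_mod_sw[OF R], rule eq_mod_antipode_right[OF R, where \<psi>="\<lambda>u. \<Phi> _ u", simplified]) (intro lin_modI R l1 l2 linI algebra_facts_H)+
  also have "eq_mod R \<dots> (sw \<Delta> x (\<lambda>c y. \<Phi> (c * S y) 1))"
    by (rule eq_mod_sw[OF R], rule eq_mod_counitL[OF R, where \<psi>="\<lambda>f. \<Phi> (_ * S f) 1", simplified]) (intro lin_modI R l1 l2 linI algebra_facts_H)+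
  also have "eq_mod R \<dots> (sR (\<epsilon> x) (\<Phi> 1 1))"
    by (rule eq_mod_antipode_right[OF R, where \<psi>="\<lambda>u. \<Phi> u 1", simplified]) (intro lin_modI R l1 l2 linI algebra_facts_H)+
  finally show ?thesis .
qed

lemma sw_antipode_anticomult:
  assumes R: "submodule sR R" and \<phi>: "bilin_mod sH sH sR R \<phi>"
  shows "eq_mod R (sw \<Delta> (S h) \<phi>) (sw \<Delta> h (\<lambda>a b. \<phi> (S b) (S a)))"
proof -
  note tr[trans] = eq_mod_trans[OF R]
  note l1 = bilin_mod_comp1[OF \<phi>] and l2 = bilin_mod_comp2[OF \<phi>]
  define G where "G z u v = sw \<Delta> z (\<lambda>e f. \<phi> (u * S f) (v * S e))" for z u v
  have Gb: "bilin_mod sH sH sR R (G z)" for z unfolding G_def by (intro bilin_modI lin_modI R l1 l2 linI algebra_facts_H)+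
  have Gz: "lin_mod sH sR R (\<lambda>z. G z u v)" for u v unfolding G_def by (intro bilin_modI lin_modI R l1 l2 linI algebra_facts_H)+
  have "eq_mod R (sw \<Delta> (S h) \<phi>) (sw \<Delta> h (\<lambda>h1 h2. sR (\<epsilon> h2) (sw \<Delta> (S h1) \<phi>)))"
    by (rule eq_mod_sym[OF R], rule eq_mod_counitR[OF R, where \<psi>="\<lambda>x. sw \<Delta> (S x) \<phi>"]) (intro lin_modI R \<phi> linI algebra_facts_H)+
  also have "eq_mod R \<dots> (sw \<Delta> h (\<lambda>h1 h2. sw \<Delta> h2 (\<lambda>g z. sw \<Delta> g (\<lambda>c d. sw \<Delta> z (\<lambda>e f. sw \<Delta> (S h1) (\<lambda>p q. \<phi> (p * (c * S f)) (q * (d * S e))))))))"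
  proof (rule eq_mod_sw[OF R], rule eq_mod_sym[OF R])
    fix h1 h2
    have "eq_mod R (sw \<Delta> h2 (\<lambda>g z. sw \<Delta> g (\<lambda>c d. sw \<Delta> z (\<lambda>e f. (\<lambda>u v. sw \<Delta> (S h1) (\<lambda>p q. \<phi> (p * u) (q * v))) (c * S f) (d * S e)))))
      (sR (\<epsilon> h2) ((\<lambda>u v. sw \<Delta> (S h1) (\<lambda>p q. \<phi> (p * u) (q * v))) 1 1))"
      by (rule sw_antipode_contract[OF R]) (intro bilin_modI lin_modI R l1 l2 linI algebra_facts_H)+
    then show "eq_mod R (sw \<Delta> h2 (\<lambda>g z. sw \<Delta> g (\<lambda>c d. sw \<Delta> z (\<lambda>e f. sw \<Delta> (S h1) (\<lambda>p q. \<phi> (p * (c * S f)) (q * (d * S e)))))))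
       (sR (\<epsilon> h2) (sw \<Delta> (S h1) \<phi>))" by simp
  qed
  also have "\<dots> = sw \<Delta> h (\<lambda>h1 h2. sw \<Delta> h2 (\<lambda>g z. sw \<Delta> (S h1) (\<lambda>p q. sw \<Delta> g (\<lambda>c d. G z (p * c) (q * d)))))"
    unfolding G_def by (intro sw_cong, subst sw_swap3, simp add: mult.assoc)
  also have "eq_mod R \<dots> (sw \<Delta> h (\<lambda>h1 h2. sw \<Delta> h2 (\<lambda>g z. sw \<Delta> (S h1 * g) (G z))))"
    by (rule eq_mod_sw[OF R], rule eq_mod_sw[OF R], rule eq_mod_sym[OF R], rule eq_mod_mult[OF R Gb])
  also have "eq_mod R \<dots> (sw \<Delta> h (\<lambda>w z. sw \<Delta> w (\<lambda>h1 g. sw \<Delta> (S h1 * g) (G z))))"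
    by (rule eq_mod_sym[OF R], rule eq_mod_coassoc[OF R]) (intro trilin_modI lin_modI R Gb Gz linI algebra_facts_H)+
  also have "eq_mod R \<dots> (sw \<Delta> h (\<lambda>w z. sR (\<epsilon> w) (sw \<Delta> 1 (G z))))"
    by (rule eq_mod_sw[OF R], rule eq_mod_antipode_left[OF R, where \<psi>="\<lambda>x. sw \<Delta> x (G _)", simplified]) (intro lin_modI R Gb linI algebra_facts_H)+
  also have "eq_mod R \<dots> (sw \<Delta> h (\<lambda>w z. sR (\<epsilon> w) (G z 1 1)))"
    by (rule eq_mod_sw[OF R], rule eq_mod_scale[OF R], rule eq_mod_one[OF R Gb])
  also have "\<dots> = sw \<Delta> h (\<lambda>w z. sR (\<epsilon> w) (sw \<Delta> z (\<lambda>e f. \<phi> (S f) (S e))))"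
    unfolding G_def by simp
  also have "eq_mod R \<dots> (sw \<Delta> h (\<lambda>e f. \<phi> (S f) (S e)))"
    by (rule eq_mod_counitL[OF R, where \<psi>="\<lambda>z. sw \<Delta> z (\<lambda>e f. \<phi> (S f) (S e))"]) (intro bilin_modI lin_modI R l1 l2 linI algebra_facts_H)+
  finally show ?thesis .
qed

end

locale cocomm_hopf = hopf +
  assumes cocomm: "cocommutative sH \<Delta>"
begin

lemma sw_cocomm:
  assumes R: "submodule sR R" and \<phi>: "bilin_mod sH sH sR R \<phi>"
  shows "sw \<Delta> h \<phi> - sw \<Delta> h (\<lambda>a b. \<phi> b a) \<in> R"
proof -
  have l1: "\<And>n. lin_mod sH sR R (\<lambda>m. \<phi> m n)" and l2: "\<And>m. lin_mod sH sR R (\<phi> m)"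
    using \<phi> by (auto simp: bilin_mod_def)
  have "teq2 sH sH (map prod.swap (\<Delta> h)) (\<Delta> h)" using cocomm by (simp add: cocommutative_def)
  from teq2_sum_diff[OF R l1 l2 this] show ?thesis
    by (simp add: sw_def o_def case_prod_beta')
    (use submodule_diff_sym[OF R] in blast)
qed

lemma sw_cocomm_eq: "module sR \<Longrightarrow> (\<And>n. lin sH sR (\<lambda>m. \<phi> m n)) \<Longrightarrow> (\<And>m. lin sH sR (\<phi> m)) \<Longrightarrow>
   sw \<Delta> h \<phi> = sw \<Delta> h (\<lambda>a b. \<phi> b a)"
  using sw_cocomm[OF submodule_zero, of sR \<phi> h] by (simp add: bilin_mod_zero_iff)

lemma eq_mod_cocomm: "submodule sR R \<Longrightarrow> bilin_mod sH sH sR R \<phi> \<Longrightarrow> eq_mod R (sw \<Delta> h \<phi>) (sw \<Delta> h (\<lambda>a b. \<phi> b a))"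
  unfolding eq_mod_def by (rule sw_cocomm)

lemma sw_antipode_comult:
  assumes R: "submodule sR R" and \<phi>: "bilin_mod sH sH sR R \<phi>"
  shows "eq_mod R (sw \<Delta> (S h) \<phi>) (sw \<Delta> h (\<lambda>a b. \<phi> (S a) (S b)))"
proof -
  note l1 = bilin_mod_comp1[OF \<phi>] and l2 = bilin_mod_comp2[OF \<phi>]
  have "eq_mod R (sw \<Delta> h (\<lambda>a b. \<phi> (S b) (S a))) (sw \<Delta> h (\<lambda>a b. \<phi> (S a) (S b)))"
    by (rule eq_mod_cocomm[OF R]) (intro bilin_modI lin_modI R l1 l2 linI algebra_facts_H)+
  then show ?thesis using eq_mod_trans[OF R sw_antipode_anticomult[OF R \<phi>]] by blast
qed

lemma antipode_involutive: "S (S h) = h"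
proof -
  have "S (S h) = sw \<Delta> h (\<lambda>a b. sH (\<epsilon> b) (S (S a)))"
    by (rule sw_counitR_eq[symmetric]) (auto intro!: linI algebra_facts_H)
  also have "\<dots> = sw \<Delta> h (\<lambda>a b. sw \<Delta> b (\<lambda>c d. S (S a) * (S c * d)))"
  proof (rule sw_cong)
    fix a b
    have "sH (\<epsilon> b) (S (S a)) = S (S a) * sH (\<epsilon> b) 1" by (simp add: k_algebra_mult_scale_one[OF k_algebra_H])
    also have "\<dots> = S (S a) * sw \<Delta> b (\<lambda>c d. S c * d)" using antipode_left[of b] by (simp add: sw_def)
    finally show "sH (\<epsilon> b) (S (S a)) = sw \<Delta> b (\<lambda>c d. S (S a) * (S c * d))" by (simp add: sw_const_mult)
  qed
  also have "\<dots> = sw \<Delta> h (\<lambda>w d. sw \<Delta> w (\<lambda>a c. S (S a) * (S c * d)))"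
    by (rule sw_coassoc_eq[symmetric]) (auto intro!: linI algebra_facts_H)
  also have "\<dots> = sw \<Delta> h (\<lambda>w d. sw \<Delta> w (\<lambda>a c. S (c * S a) * d))"
    by (simp add: antipode_mult mult.assoc)
  also have "\<dots> = sw \<Delta> h (\<lambda>w d. sw \<Delta> w (\<lambda>a c. S (a * S c) * d))"
  proof (rule sw_cong)
    fix w d show "sw \<Delta> w (\<lambda>a c. S (c * S a) * d) = sw \<Delta> w (\<lambda>a c. S (a * S c) * d)"
      by (rule sw_cocomm_eq) (auto intro!: linI algebra_facts_H)
  qed
  also have "\<dots> = sw \<Delta> h (\<lambda>w d. sH (\<epsilon> w) (S 1 * d))"
  proof (rule sw_cong)
    fix w d show "sw \<Delta> w (\<lambda>a c. S (a * S c) * d) = sH (\<epsilon> w) (S 1 * d)"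
      by (rule sw_antipode_right_eq[where sR=sH and \<psi>="\<lambda>u. S u * d"]) (auto intro!: linI algebra_facts_H)
  qed
  also have "\<dots> = h"
    by (simp add: antipode_one, rule sw_counitL_eq) (auto intro!: linI algebra_facts_H)
  finally show ?thesis .
qed

lemma sw3_left:
  assumes "module sR" "\<And>b c. lin sH sR (\<lambda>a. F a b c)" "\<And>a c. lin sH sR (\<lambda>b. F a b c)" "\<And>a b. lin sH sR (F a b)"
  shows "sw \<Delta> h (\<lambda>m c. sw \<Delta> m (\<lambda>a b. F a b c)) = sw3 \<Delta> h F"
  unfolding sw3_def by (rule sw_coassoc_eq) (use assms in auto)

lemma sw3_swap12:
  assumes "module sR" "\<And>b c. lin sH sR (\<lambda>a. F a b c)" "\<And>a c. lin sH sR (\<lambda>b. F a b c)" "\<And>a b. lin sH sR (F a b)"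
  shows "sw3 \<Delta> h F = sw3 \<Delta> h (\<lambda>a b c. F b a c)"
proof -
  have "sw3 \<Delta> h F = sw \<Delta> h (\<lambda>m c. sw \<Delta> m (\<lambda>a b. F a b c))"
    by (rule sw3_left[symmetric]) (use assms in auto)
  also have "\<dots> = sw \<Delta> h (\<lambda>m c. sw \<Delta> m (\<lambda>a b. F b a c))"
    by (intro sw_cong sw_cocomm_eq) (use assms in auto)
  also have "\<dots> = sw3 \<Delta> h (\<lambda>a b c. F b a c)"
    by (rule sw3_left) (use assms in auto)
  finally show ?thesis .
qed

lemma sw3_swap23:
  assumes "module sR" "\<And>b c. lin sH sR (\<lambda>a. F a b c)" "\<And>a c. lin sH sR (\<lambda>b. F a b c)" "\<And>a b. lin sH sR (F a b)"
  shows "sw3 \<Delta> h F = sw3 \<Delta> h (\<lambda>a b c. F a c b)"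
  unfolding sw3_def by (intro sw_cong sw_cocomm_eq) (use assms in auto)

lemma sw4_swap34:
  assumes "module sR" "\<And>b c d. lin sH sR (\<lambda>a. F a b c d)" "\<And>a c d. lin sH sR (\<lambda>b. F a b c d)"
    "\<And>a b d. lin sH sR (\<lambda>c. F a b c d)" "\<And>a b c. lin sH sR (F a b c)"
  shows "sw4 \<Delta> h F = sw4 \<Delta> h (\<lambda>a b c d. F a b d c)"
  unfolding sw4_def by (intro sw_cong sw3_swap23) (use assms in auto)

lemma sw4_mid:
  assumes "module sR" "\<And>b c d. lin sH sR (\<lambda>a. F a b c d)" "\<And>a c d. lin sH sR (\<lambda>b. F a b c d)"
    "\<And>a b d. lin sH sR (\<lambda>c. F a b c d)" "\<And>a b c. lin sH sR (F a b c)"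
  shows "sw3 \<Delta> h (\<lambda>a m d. sw \<Delta> m (\<lambda>b c. F a b c d)) = sw4 \<Delta> h F"
  unfolding sw4_def sw3_def by (intro sw_cong sw3_left[unfolded sw3_def]) (use assms in auto)

end

definition fscale :: "'k::comm_ring_1 \<Rightarrow> ('p \<Rightarrow> 'k) \<Rightarrow> ('p \<Rightarrow> 'k)" where
  "fscale r F = (\<lambda>p. r * F p)"

lemma module_fscale: "module (fscale :: 'k::comm_ring_1 \<Rightarrow> ('p \<Rightarrow> 'k) \<Rightarrow> ('p \<Rightarrow> 'k))"
  by (simp add: module_def fscale_def fun_eq_iff algebra_simps)

lemma submodule_tens2_rel: "submodule fscale (tens2_rel sM sN)"
  unfolding submodule_def
proof (intro conjI ballI allI)
  show "module fscale" by (rule module_fscale)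
  show "0 \<in> tens2_rel sM sN" by (rule tens2_rel.zero)
  fix x y assume "x \<in> tens2_rel sM sN" "y \<in> tens2_rel sM sN"
  then show "x + y \<in> tens2_rel sM sN" by (rule tens2_rel.add)
next
  fix c x assume "x \<in> tens2_rel sM sN"
  then show "fscale c x \<in> tens2_rel sM sN" unfolding fscale_def by (rule tens2_rel.scale)
qed

lemma teq2_eq_mod: "teq2 sM sN xs ys \<longleftrightarrow> eq_mod (tens2_rel sM sN) (fsum xs) (fsum ys)"
  by (simp add: teq2_def eq_mod_def)

lemma fsum_add_left_rel: "fsum [(m + m', n)] - (fsum [(m, n)] + fsum [(m', n)]) \<in> tens2_rel sM sN"
  using tens2_rel.addL[where sM=sM and sN=sN and m=m and m'=m' and n=n] by (simp add: diff_diff_eq)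
lemma fsum_add_right_rel: "fsum [(m, n + n')] - (fsum [(m, n)] + fsum [(m, n')]) \<in> tens2_rel sM sN"
  using tens2_rel.addR[where sM=sM and sN=sN and m=m and n'=n' and n=n] by (simp add: diff_diff_eq)

lemma lin_mod_tensor_left: "lin sX sM \<alpha> \<Longrightarrow> lin_mod sX fscale (tens2_rel sM sN) (\<lambda>x. fsum [(\<alpha> x, c)])"
  unfolding lin_mod_def lin_def
  using fsum_add_left_rel[where sM=sM and sN=sN] tens2_rel.smulL[where sM=sM and sN=sN] by (simp add: fscale_def)
lemma lin_mod_tensor_right: "lin sX sN \<beta> \<Longrightarrow> lin_mod sX fscale (tens2_rel sM sN) (\<lambda>x. fsum [(c, \<beta> x)])"
  unfolding lin_mod_def lin_def
  using fsum_add_right_rel[where sM=sM and sN=sN] tens2_rel.smulR[where sM=sM and sN=sN] by (simp add: fscale_def)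

lemma fsum_map_scale_left: "eq_mod (tens2_rel sM sN) (fsum (map (\<lambda>(a, b). (sM r a, b)) L)) (fscale r (fsum L))"
proof (induction L)
  case Nil
  have e: "fsum (map (\<lambda>(a, b). (sM r a, b)) []) - fscale r (fsum []) = 0" by (simp add: fsum_def fscale_def fun_eq_iff)
  show ?case unfolding eq_mod_def e by (rule tens2_rel.zero)
next
  case (Cons p L)
  obtain a b where p: "p = (a, b)" by force
  have 1: "fsum [(sM r a, b)] - fscale r (fsum [(a, b)]) \<in> tens2_rel sM sN"
    using tens2_rel.smulL[where sM=sM and sN=sN and r=r and m=a and n=b] by (simp add: fscale_def)
  have "(fsum [(sM r a, b)] + fsum (map (\<lambda>(a, b). (sM r a, b)) L)) - (fscale r (fsum [(a, b)]) + fscale r (fsum L)) \<in> tens2_rel sM sN"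
    using submodule_diff_add[OF submodule_tens2_rel 1 Cons.IH[unfolded eq_mod_def]] .
  moreover have "fscale r (fsum [(a, b)]) + fscale r (fsum L) = fscale r (fsum [(a, b)] + fsum L)"
    by (simp add: fscale_def fun_eq_iff distrib_left)
  moreover have "fsum (map (\<lambda>(a, b). (sM r a, b)) (p # L)) = fsum [(sM r a, b)] + fsum (map (\<lambda>(a, b). (sM r a, b)) L)"
    unfolding p by (subst fsum_Cons[symmetric]) simp
  moreover have "fsum (p # L) = fsum [(a, b)] + fsum L" unfolding p by (rule fsum_Cons)
  ultimately show ?case unfolding eq_mod_def by (metis p)
qed

lemma fsum_list: "fsum xs = (\<Sum>p\<leftarrow>xs. fsum [p])"
  by (induction xs) (simp add: fsum_Nil, subst fsum_Cons, simp)

lemma lin_mod_sum_list_fun[lin_modI]: "submodule sR R \<Longrightarrow> (\<And>i. lin_mod sX sR R (\<lambda>x. F x i)) \<Longrightarrow> lin_mod sX sR R (\<lambda>x. \<Sum>i\<leftarrow>L. F x i)"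
proof (induction L)
  case Nil then show ?case by (simp add: lin_mod_def submodule_zero_mem module.scale_zero_right[OF submodule_module])
next
  case (Cons a L)
  have "lin_mod sX sR R (\<lambda>x. F x a + (\<Sum>i\<leftarrow>L. F x i))"
    by (rule lin_mod_add[OF Cons.prems(1) Cons.prems(2) Cons.IH[OF Cons.prems]])
  then show ?case by simp
qed

lemma fsum_tmult: "fsum (tmult xs ys) = (\<Sum>(a, b)\<leftarrow>xs. \<Sum>(c, d)\<leftarrow>ys. fsum [(a * c, b * d)])"
  unfolding tmult_def fsum_concat by (simp add: o_def case_prod_beta' fsum_concat, subst fsum_list, simp add: o_def)

lemma fsum_map2: "fsum (map (\<lambda>(x, y). (f x y, g x y)) xs) = (\<Sum>(x, y)\<leftarrow>xs. fsum [(f x y, g x y)])"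
  by (subst fsum_list) (simp add: o_def case_prod_beta')

lemma tmult_congL:
  assumes kM: "k_algebra sM" and kN: "k_algebra sN" and t: "teq2 sM sN xs xs'"
  shows "teq2 sM sN (tmult xs ys) (tmult xs' ys)"
proof -
  have "(\<Sum>(a, b)\<leftarrow>xs. (\<lambda>a b. \<Sum>(c, d)\<leftarrow>ys. fsum [(a * c, b * d)]) a b) - (\<Sum>(a, b)\<leftarrow>xs'. (\<lambda>a b. \<Sum>(c, d)\<leftarrow>ys. fsum [(a * c, b * d)]) a b) \<in> tens2_rel sM sN"
  proof (rule teq2_sum_diff[OF submodule_tens2_rel _ _ t])
    fix n show "lin_mod sM fscale (tens2_rel sM sN) (\<lambda>m. \<Sum>(c, d)\<leftarrow>ys. fsum [(m * c, n * d)])"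
      unfolding split_def
      by (intro lin_modI submodule_tens2_rel lin_mod_tensor_left linI kM kN k_algebra_module)
  next
    fix m show "lin_mod sN fscale (tens2_rel sM sN) (\<lambda>n. \<Sum>(c, d)\<leftarrow>ys. fsum [(m * c, n * d)])"
      unfolding split_def
      by (intro lin_modI submodule_tens2_rel lin_mod_tensor_right linI kM kN k_algebra_module)
  qed
  then show ?thesis unfolding teq2_def by (simp add: fsum_tmult)
qed

lemma tmult_congR:
  assumes kM: "k_algebra sM" and kN: "k_algebra sN" and t: "teq2 sM sN ys ys'"
  shows "teq2 sM sN (tmult xs ys) (tmult xs ys')"
proof -
  have "(\<Sum>(c, d)\<leftarrow>ys. (\<lambda>c d. \<Sum>(a, b)\<leftarrow>xs. fsum [(a * c, b * d)]) c d) - (\<Sum>(c, d)\<leftarrow>ys'. (\<lambda>c d. \<Sum>(a, b)\<leftarrow>xs. fsum [(a * c, b * d)]) c d) \<in> tens2_rel sM sN"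
  proof (rule teq2_sum_diff[OF submodule_tens2_rel _ _ t])
    fix n show "lin_mod sM fscale (tens2_rel sM sN) (\<lambda>m. \<Sum>(a, b)\<leftarrow>xs. fsum [(a * m, b * n)])"
      unfolding split_def
      by (intro lin_modI submodule_tens2_rel lin_mod_tensor_left linI kM kN k_algebra_module)
  next
    fix m show "lin_mod sN fscale (tens2_rel sM sN) (\<lambda>n. \<Sum>(a, b)\<leftarrow>xs. fsum [(a * m, b * n)])"
      unfolding split_def
      by (intro lin_modI submodule_tens2_rel lin_mod_tensor_right linI kM kN k_algebra_module)
  qed
  then show ?thesis unfolding teq2_def fsum_tmult
    by (simp add: split_def sum_list_swap[where xs=xs])
qed

section \<open>Cleft comodule algebras\<close>

locale cleft = cocomm_hopf sH \<Delta> \<epsilon> S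
  for sH :: "'k::comm_ring_1 \<Rightarrow> 'h::ring_1 \<Rightarrow> 'h"
    and \<Delta> :: "'h \<Rightarrow> ('h \<times> 'h) list" and \<epsilon> :: "'h \<Rightarrow> 'k" and S :: "'h \<Rightarrow> 'h" +
  fixes sA :: "'k \<Rightarrow> 'a::ring_1 \<Rightarrow> 'a" and \<rho> :: "'a \<Rightarrow> ('a \<times> 'h) list"
    and t u :: "'h \<Rightarrow> 'a"
  assumes comod: "right_comodule_algebra sA \<rho> sH \<Delta> \<epsilon>"
    and Bcomm: "\<forall>a \<in> coinv sA sH \<rho>. \<forall>b \<in> coinv sA sH \<rho>. a * b = b * a"
    and t_lin: "t \<in> HomHA sH sA" and t_colin: "colinear sA sH \<rho> \<Delta> t"
    and u_lin: "u \<in> HomHA sH sA"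
    and tu: "conv \<Delta> t u = cunit sA \<epsilon>" and ut: "conv \<Delta> u t = cunit sA \<epsilon>"
begin

abbreviation "RT \<equiv> tens2_rel sA sH"

lemma k_algebra_A: "k_algebra sA" using comod by (simp add: right_comodule_algebra_def)
lemma module_A: "module sA" using k_algebra_A by (simp add: k_algebra_def)
lemmas algebra_facts_A = algebra_facts_H k_algebra_A module_A

lemma submodule_RT: "submodule fscale RT" by (rule submodule_tens2_rel)

lemmas tensor_lin_modI = submodule_RT lin_mod_tensor_left lin_mod_tensor_right

lemma rho_add: "teq2 sA sH (\<rho> (x + y)) (\<rho> x @ \<rho> y)" using comod by (simp add: right_comodule_algebra_def)
lemma rho_scale: "teq2 sA sH (\<rho> (sA r x)) (map (\<lambda>(a, b). (sA r a, b)) (\<rho> x))" using comod by (simp add: right_comodule_algebra_def)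
lemma rho_mult: "teq2 sA sH (\<rho> (x * y)) (tmult (\<rho> x) (\<rho> y))" using comod by (simp add: right_comodule_algebra_def)
lemma rho_one: "teq2 sA sH (\<rho> 1) [(1, 1)]" using comod by (simp add: right_comodule_algebra_def)

lemma rho_lin_mod: "lin_mod sA fscale RT (\<lambda>a. fsum (\<rho> a))"
  unfolding lin_mod_def
proof (intro conjI allI)
  fix x y show "fsum (\<rho> (x + y)) - (fsum (\<rho> x) + fsum (\<rho> y)) \<in> RT"
    using rho_add[of x y] by (simp add: teq2_def fsum_append)
next
  fix c x show "fsum (\<rho> (sA c x)) - fscale c (fsum (\<rho> x)) \<in> RT"
    using eq_mod_trans[OF submodule_RT rho_scale[of c x, unfolded teq2_eq_mod] fsum_map_scale_left] by (simp add: eq_mod_def)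
qed

lemma rho_sw: "eq_mod RT (fsum (\<rho> (sw \<Delta> h \<phi>))) (sw \<Delta> h (\<lambda>a b. fsum (\<rho> (\<phi> a b))))"
  using lin_mod_sum_list[OF rho_lin_mod submodule_RT, of "case_prod \<phi>" "\<Delta> h"]
  by (simp add: eq_mod_def sw_def case_prod_beta')

lemma fsum_sw_left: "eq_mod RT (fsum [(sw \<Delta> h \<phi>, c)]) (sw \<Delta> h (\<lambda>a b. fsum [(\<phi> a b, c)]))"
  using lin_mod_sum_list[OF lin_mod_tensor_left[OF lin_id] submodule_RT, of "case_prod \<phi>" "\<Delta> h"]
  by (simp add: eq_mod_def sw_def case_prod_beta')

lemma rho_mult_eq_mod: "eq_mod RT (fsum (\<rho> a)) (fsum La) \<Longrightarrow> eq_mod RT (fsum (\<rho> b)) (fsum Lb) \<Longrightarrow>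
   eq_mod RT (fsum (\<rho> (a * b))) (fsum (tmult La Lb))"
proof -
  assume 1: "eq_mod RT (fsum (\<rho> a)) (fsum La)" and 2: "eq_mod RT (fsum (\<rho> b)) (fsum Lb)"
  have "teq2 sA sH (tmult (\<rho> a) (\<rho> b)) (tmult La (\<rho> b))"
    by (rule tmult_congL[OF k_algebra_A k_algebra_H]) (use 1 in \<open>simp add: teq2_eq_mod\<close>)
  moreover have "teq2 sA sH (tmult La (\<rho> b)) (tmult La Lb)"
    by (rule tmult_congR[OF k_algebra_A k_algebra_H]) (use 2 in \<open>simp add: teq2_eq_mod\<close>)
  ultimately show ?thesis using rho_mult[of a b] unfolding teq2_eq_mod
    by (meson eq_mod_trans[OF submodule_RT])
qed

definition anticolinear :: "('h \<Rightarrow> 'a) \<Rightarrow> bool" where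
  "anticolinear g \<longleftrightarrow> (\<forall>h. teq2 sA sH (\<rho> (g h)) (map (\<lambda>(x, y). (g y, S x)) (\<Delta> h)))"

lemma coinv_iff_eq_mod: "a \<in> coinv sA sH \<rho> \<longleftrightarrow> eq_mod RT (fsum (\<rho> a)) (fsum [(a, 1)])"
  by (simp add: coinv_def teq2_eq_mod)

lemma colinearD: "colinear sA sH \<rho> \<Delta> f \<Longrightarrow> eq_mod RT (fsum (\<rho> (f h))) (fsum (map (\<lambda>(x, y). (f x, y)) (\<Delta> h)))"
  by (simp add: colinear_def teq2_eq_mod)
lemma anticolinearD: "anticolinear g \<Longrightarrow> eq_mod RT (fsum (\<rho> (g h))) (fsum (map (\<lambda>(x, y). (g y, S x)) (\<Delta> h)))"
  by (simp add: anticolinear_def teq2_eq_mod)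

lemma fsum_tmult_maps: "fsum (tmult (map (\<lambda>(x, y). (F x y, G x y)) L1) (map (\<lambda>(x, y). (F' x y, G' x y)) L2))
  = (\<Sum>(a, b)\<leftarrow>L1. \<Sum>(c, d)\<leftarrow>L2. fsum [(F a b * F' c d, G a b * G' c d)])"
  by (simp add: fsum_tmult o_def case_prod_beta')

lemma conv_colinear_anticolinear_coinv:
  assumes f: "lin sH sA f" "colinear sA sH \<rho> \<Delta> f" and g: "lin sH sA g" "anticolinear g"
  shows "conv \<Delta> f g h \<in> coinv sA sH \<rho>"
proof -
  note tr[trans] = eq_mod_trans[OF submodule_RT]
  have "eq_mod RT (fsum (\<rho> (conv \<Delta> f g h))) (sw \<Delta> h (\<lambda>x y. fsum (\<rho> (f x * g y))))"
    unfolding conv_def using rho_sw[of h "\<lambda>x y. f x * g y"] by (simp add: sw_def)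
  also have "eq_mod RT \<dots> (sw \<Delta> h (\<lambda>x y. fsum (tmult (map (\<lambda>(x, y). (f x, y)) (\<Delta> x)) (map (\<lambda>(x, y). (g y, S x)) (\<Delta> y)))))"
    by (intro eq_mod_sw[OF submodule_RT] rho_mult_eq_mod colinearD anticolinearD f g)
  also have "\<dots> = sw \<Delta> h (\<lambda>x y. sw \<Delta> x (\<lambda>x1 x2. sw \<Delta> y (\<lambda>y1 y2. fsum [(f x1 * g y2, x2 * S y1)])))"
    by (simp add: fsum_tmult_maps sw_def)
  also have "eq_mod RT \<dots> (sw \<Delta> h (\<lambda>x1 z. sw \<Delta> z (\<lambda>x2 y. sw \<Delta> y (\<lambda>y1 y2. fsum [(f x1 * g y2, x2 * S y1)]))))"
    by (rule eq_mod_coassoc[OF submodule_RT]) (intro trilin_modI bilin_modI lin_modI tensor_lin_modI f g linI algebra_facts_A)+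
  also have "eq_mod RT \<dots> (sw \<Delta> h (\<lambda>x1 z. sw \<Delta> z (\<lambda>w y2. sw \<Delta> w (\<lambda>x2 y1. fsum [(f x1 * g y2, x2 * S y1)]))))"
    by (rule eq_mod_sw[OF submodule_RT], rule eq_mod_sym[OF submodule_RT], rule eq_mod_coassoc[OF submodule_RT])
      (intro trilin_modI bilin_modI lin_modI tensor_lin_modI f g linI algebra_facts_A)+
  also have "eq_mod RT \<dots> (sw \<Delta> h (\<lambda>x1 z. sw \<Delta> z (\<lambda>w y2. fscale (\<epsilon> w) (fsum [(f x1 * g y2, 1)]))))"
    by (rule eq_mod_sw[OF submodule_RT], rule eq_mod_sw[OF submodule_RT], rule eq_mod_antipode_right[OF submodule_RT, where \<psi>="\<lambda>u. fsum [(_, u)]"])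
      (intro bilin_modI lin_modI tensor_lin_modI f g linI algebra_facts_A)+
  also have "eq_mod RT \<dots> (sw \<Delta> h (\<lambda>x1 z. fsum [(f x1 * g z, 1)]))"
    by (rule eq_mod_sw[OF submodule_RT], rule eq_mod_counitL[OF submodule_RT, where \<psi>="\<lambda>y. fsum [(_ * g y, 1)]"])
      (intro bilin_modI lin_modI tensor_lin_modI f g linI algebra_facts_A)+
  also have "eq_mod RT \<dots> (fsum [(conv \<Delta> f g h, 1)])"
    unfolding conv_def using eq_mod_sym[OF submodule_RT fsum_sw_left[of h "\<lambda>x y. f x * g y" 1]] by (simp add: sw_def)
  finally show ?thesis by (simp add: coinv_iff_eq_mod)
qed

abbreviation "B \<equiv> coinv sA sH \<rho>"

lemma conv_sw: "conv \<Delta> f g h = sw \<Delta> h (\<lambda>a b. f a * g b)"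
  by (simp add: conv_def sw_def)

lemma coinv_sw: "(\<And>a b. \<phi> a b \<in> B) \<Longrightarrow> sw \<Delta> h \<phi> \<in> B"
proof -
  assume a: "\<And>a b. \<phi> a b \<in> B"
  note tr[trans] = eq_mod_trans[OF submodule_RT]
  have "eq_mod RT (fsum (\<rho> (sw \<Delta> h \<phi>))) (sw \<Delta> h (\<lambda>a b. fsum (\<rho> (\<phi> a b))))" by (rule rho_sw)
  also have "eq_mod RT \<dots> (sw \<Delta> h (\<lambda>a b. fsum [(\<phi> a b, 1)]))"
    by (rule eq_mod_sw[OF submodule_RT]) (use a in \<open>simp add: coinv_iff_eq_mod\<close>)
  also have "eq_mod RT \<dots> (fsum [(sw \<Delta> h \<phi>, 1)])" by (rule eq_mod_sym[OF submodule_RT fsum_sw_left])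
  finally show ?thesis by (simp add: coinv_iff_eq_mod)
qed

lemma coinv_mult: "a \<in> B \<Longrightarrow> b \<in> B \<Longrightarrow> a * b \<in> B"
  using rho_mult_eq_mod[of a "[(a, 1)]" b "[(b, 1)]"] by (simp add: coinv_iff_eq_mod tmult_def)

lemma coinv_one: "1 \<in> B"
  using rho_one by (simp add: coinv_def)

lemma coinv_scale: "a \<in> B \<Longrightarrow> sA r a \<in> B"
proof -
  assume a: "a \<in> B"
  note tr[trans] = eq_mod_trans[OF submodule_RT]
  have "eq_mod RT (fsum (\<rho> (sA r a))) (fscale r (fsum (\<rho> a)))" using rho_lin_mod by (simp add: lin_mod_def eq_mod_def)
  also have "eq_mod RT \<dots> (fscale r (fsum [(a, 1)]))" by (rule eq_mod_scale[OF submodule_RT]) (use a in \<open>simp add: coinv_iff_eq_mod\<close>)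
  also have "eq_mod RT \<dots> (fsum [(sA r a, 1)])" using lin_mod_tensor_left[OF lin_id[of sA], where sN=sH and c=1] submodule_RT
    by (simp add: lin_mod_def eq_mod_def) (metis eq_mod_def eq_mod_sym)
  finally show ?thesis by (simp add: coinv_iff_eq_mod)
qed

lemma cunit_coinv: "cunit sA \<epsilon> h \<in> B"
  by (simp add: cunit_def coinv_scale coinv_one)

lemma conv_coinv: "(\<And>h. f h \<in> B) \<Longrightarrow> (\<And>h. g h \<in> B) \<Longrightarrow> conv \<Delta> f g h \<in> B"
  unfolding conv_def using coinv_sw[of "\<lambda>a b. f a * g b" h] coinv_mult by (simp add: sw_def)

lemma conv_anticolinear_colinear_coinv:
  assumes g: "lin sH sA g" "anticolinear g" and f: "lin sH sA f" "colinear sA sH \<rho> \<Delta> f"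
  shows "conv \<Delta> g f h \<in> B"
proof -
  note tr[trans] = eq_mod_trans[OF submodule_RT]
  have "eq_mod RT (fsum (\<rho> (conv \<Delta> g f h))) (sw \<Delta> h (\<lambda>x y. fsum (\<rho> (g x * f y))))"
    unfolding conv_def using rho_sw[of h "\<lambda>x y. g x * f y"] by (simp add: sw_def)
  also have "eq_mod RT \<dots> (sw \<Delta> h (\<lambda>x y. fsum (tmult (map (\<lambda>(x, y). (g y, S x)) (\<Delta> x)) (map (\<lambda>(x, y). (f x, y)) (\<Delta> y)))))"
    by (intro eq_mod_sw[OF submodule_RT] rho_mult_eq_mod colinearD anticolinearD f g)
  also have "\<dots> = sw \<Delta> h (\<lambda>x y. sw \<Delta> x (\<lambda>x1 x2. sw \<Delta> y (\<lambda>y1 y2. fsum [(g x2 * f y1, S x1 * y2)])))"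
    by (simp add: fsum_tmult_maps sw_def)
  also have "eq_mod RT \<dots> (sw \<Delta> h (\<lambda>x1 z. sw \<Delta> z (\<lambda>x2 y. sw \<Delta> y (\<lambda>y1 y2. fsum [(g x2 * f y1, S x1 * y2)]))))"
    by (rule eq_mod_coassoc[OF submodule_RT]) (intro trilin_modI bilin_modI lin_modI tensor_lin_modI f g linI algebra_facts_A)+
  also have "eq_mod RT \<dots> (sw \<Delta> h (\<lambda>x1 z. sw \<Delta> z (\<lambda>m y2. sw \<Delta> m (\<lambda>x2 y1. fsum [(g x2 * f y1, S x1 * y2)]))))"
    by (rule eq_mod_sw[OF submodule_RT], rule eq_mod_sym[OF submodule_RT], rule eq_mod_coassoc[OF submodule_RT])
      (intro trilin_modI bilin_modI lin_modI tensor_lin_modI f g linI algebra_facts_A)+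
  also have "eq_mod RT \<dots> (sw \<Delta> h (\<lambda>n y2. sw \<Delta> n (\<lambda>x1 m. sw \<Delta> m (\<lambda>x2 y1. fsum [(g x2 * f y1, S x1 * y2)]))))"
    by (rule eq_mod_sym[OF submodule_RT], rule eq_mod_coassoc[OF submodule_RT])
      (intro trilin_modI bilin_modI lin_modI tensor_lin_modI f g linI algebra_facts_A)+
  also have "eq_mod RT \<dots> (sw \<Delta> h (\<lambda>n y2. sw \<Delta> n (\<lambda>m x1. sw \<Delta> m (\<lambda>x2 y1. fsum [(g x2 * f y1, S x1 * y2)]))))"
    by (rule eq_mod_sw[OF submodule_RT], rule eq_mod_cocomm[OF submodule_RT])
      (intro trilin_modI bilin_modI lin_modI tensor_lin_modI f g linI algebra_facts_A)+
  also have "eq_mod RT \<dots> (sw \<Delta> h (\<lambda>m n. sw \<Delta> n (\<lambda>x1 y2. sw \<Delta> m (\<lambda>x2 y1. fsum [(g x2 * f y1, S x1 * y2)]))))"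
    by (rule eq_mod_coassoc[OF submodule_RT])
      (intro trilin_modI bilin_modI lin_modI tensor_lin_modI f g linI algebra_facts_A)+
  also have "eq_mod RT \<dots> (sw \<Delta> h (\<lambda>m n. fscale (\<epsilon> n) (sw \<Delta> m (\<lambda>x2 y1. fsum [(g x2 * f y1, 1)]))))"
    by (rule eq_mod_sw[OF submodule_RT], rule eq_mod_antipode_left[OF submodule_RT, where \<psi>="\<lambda>u. sw \<Delta> _ (\<lambda>x2 y1. fsum [(g x2 * f y1, u)])"])
      (intro trilin_modI bilin_modI lin_modI tensor_lin_modI f g linI algebra_facts_A)+
  also have "eq_mod RT \<dots> (sw \<Delta> h (\<lambda>x2 y1. fsum [(g x2 * f y1, 1)]))"
    by (rule eq_mod_counitR[OF submodule_RT, where \<psi>="\<lambda>m. sw \<Delta> m (\<lambda>x2 y1. fsum [(g x2 * f y1, 1)])"])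
      (intro trilin_modI bilin_modI lin_modI tensor_lin_modI f g linI algebra_facts_A)+
  also have "eq_mod RT \<dots> (fsum [(conv \<Delta> g f h, 1)])"
    unfolding conv_def using eq_mod_sym[OF submodule_RT fsum_sw_left[of h "\<lambda>x y. g x * f y" 1]] by (simp add: sw_def)
  finally show ?thesis by (simp add: coinv_iff_eq_mod)
qed

lemma fsum_map3: "fsum (map (\<lambda>(x, y, z). (F x y z, G x y z)) xs) = (\<Sum>(x, y, z)\<leftarrow>xs. fsum [(F x y z, G x y z)])"
  by (subst fsum_list) (simp add: o_def case_prod_beta')

lemma D3_left: "D3 \<Delta> h = D_left \<Delta> \<Delta> h"
  by (simp add: D3_def D_left_def)

lemma coinv_map_rho_D3:
  assumes w: "lin sH sA w" "\<And>h. w h \<in> B"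
  shows "teq2 sA sH (\<rho> (w h)) (map (\<lambda>(x, y, z). (w y, S x * z)) (D3 \<Delta> h))"
proof -
  note tr[trans] = eq_mod_trans[OF submodule_RT]
  have "eq_mod RT (fsum (map (\<lambda>(x, y, z). (w y, S x * z)) (D3 \<Delta> h))) (sw \<Delta> h (\<lambda>x y. sw \<Delta> y (\<lambda>y1 y2. fsum [(w y1, S x * y2)])))"
    unfolding fsum_map3 D3_left sum_D_left by (rule eq_mod_refl[OF submodule_RT])
  also have "eq_mod RT \<dots> (sw \<Delta> h (\<lambda>m y2. sw \<Delta> m (\<lambda>x y1. fsum [(w y1, S x * y2)])))"
    by (rule eq_mod_sym[OF submodule_RT], rule eq_mod_coassoc[OF submodule_RT])
      (intro trilin_modI bilin_modI lin_modI tensor_lin_modI w linI algebra_facts_A)+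
  also have "eq_mod RT \<dots> (sw \<Delta> h (\<lambda>m y2. sw \<Delta> m (\<lambda>y1 x. fsum [(w y1, S x * y2)])))"
    by (rule eq_mod_sw[OF submodule_RT], rule eq_mod_cocomm[OF submodule_RT])
      (intro trilin_modI bilin_modI lin_modI tensor_lin_modI w linI algebra_facts_A)+
  also have "eq_mod RT \<dots> (sw \<Delta> h (\<lambda>y1 n. sw \<Delta> n (\<lambda>x y2. fsum [(w y1, S x * y2)])))"
    by (rule eq_mod_coassoc[OF submodule_RT])
      (intro trilin_modI bilin_modI lin_modI tensor_lin_modI w linI algebra_facts_A)+
  also have "eq_mod RT \<dots> (sw \<Delta> h (\<lambda>y1 n. fscale (\<epsilon> n) (fsum [(w y1, 1)])))"
    by (rule eq_mod_sw[OF submodule_RT], rule eq_mod_antipode_left[OF submodule_RT, where \<psi>="\<lambda>u. fsum [(_, u)]"])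
      (intro trilin_modI bilin_modI lin_modI tensor_lin_modI w linI algebra_facts_A)+
  also have "eq_mod RT \<dots> (fsum [(w h, 1)])"
    by (rule eq_mod_counitR[OF submodule_RT, where \<psi>="\<lambda>m. fsum [(w m, 1)]"])
      (intro trilin_modI bilin_modI lin_modI tensor_lin_modI w linI algebra_facts_A)+
  also have "eq_mod RT \<dots> (fsum (\<rho> (w h)))" using w(2)[of h] by (simp add: coinv_iff_eq_mod eq_mod_sym[OF submodule_RT])
  finally show ?thesis unfolding teq2_eq_mod by (rule eq_mod_sym[OF submodule_RT])
qed

lemma colinear_conv_coinv_left:
  assumes v: "lin sH sA v" "\<And>h. v h \<in> B" and f: "lin sH sA f" "colinear sA sH \<rho> \<Delta> f"
  shows "colinear sA sH \<rho> \<Delta> (conv \<Delta> v f)"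
  unfolding colinear_def teq2_eq_mod
proof
  fix h
  note tr[trans] = eq_mod_trans[OF submodule_RT]
  have "eq_mod RT (fsum (\<rho> (conv \<Delta> v f h))) (sw \<Delta> h (\<lambda>x y. fsum (\<rho> (v x * f y))))"
    unfolding conv_def using rho_sw[of h "\<lambda>x y. v x * f y"] by (simp add: sw_def)
  also have "eq_mod RT \<dots> (sw \<Delta> h (\<lambda>x y. fsum (tmult [(v x, 1)] (map (\<lambda>(x, y). (f x, y)) (\<Delta> y)))))"
    by (intro eq_mod_sw[OF submodule_RT] rho_mult_eq_mod colinearD f) (use v in \<open>simp add: coinv_iff_eq_mod\<close>)
  also have "\<dots> = sw \<Delta> h (\<lambda>x y. sw \<Delta> y (\<lambda>y1 y2. fsum [(v x * f y1, y2)]))"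
    by (simp add: fsum_tmult sw_def o_def case_prod_beta')
  also have "eq_mod RT \<dots> (sw \<Delta> h (\<lambda>x y. sw \<Delta> x (\<lambda>a c. fsum [(v a * f c, y)])))"
    by (rule eq_mod_sym[OF submodule_RT], rule eq_mod_coassoc[OF submodule_RT])
      (intro trilin_modI bilin_modI lin_modI tensor_lin_modI f v linI algebra_facts_A)+
  also have "eq_mod RT \<dots> (sw \<Delta> h (\<lambda>x y. fsum [(conv \<Delta> v f x, y)]))"
    unfolding conv_sw by (rule eq_mod_sw[OF submodule_RT], rule eq_mod_sym[OF submodule_RT], rule fsum_sw_left)
  also have "\<dots> = fsum (map (\<lambda>(x, y). (conv \<Delta> v f x, y)) (\<Delta> h))"
    by (simp add: fsum_map2 sw_def)
  finally show "eq_mod RT (fsum (\<rho> (conv \<Delta> v f h))) (fsum (map (\<lambda>(x, y). (conv \<Delta> v f x, y)) (\<Delta> h)))" .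
qed

lemma colinear_conv_coinv_right:
  assumes v: "lin sH sA v" "\<And>h. v h \<in> B" and f: "lin sH sA f" "colinear sA sH \<rho> \<Delta> f"
  shows "colinear sA sH \<rho> \<Delta> (conv \<Delta> f v)"
  unfolding colinear_def teq2_eq_mod
proof
  fix h
  note tr[trans] = eq_mod_trans[OF submodule_RT]
  have "eq_mod RT (fsum (\<rho> (conv \<Delta> f v h))) (sw \<Delta> h (\<lambda>x y. fsum (\<rho> (f x * v y))))"
    unfolding conv_def using rho_sw[of h "\<lambda>x y. f x * v y"] by (simp add: sw_def)
  also have "eq_mod RT \<dots> (sw \<Delta> h (\<lambda>x y. fsum (tmult (map (\<lambda>(x, y). (f x, y)) (\<Delta> x)) [(v y, 1)])))"
    by (intro eq_mod_sw[OF submodule_RT] rho_mult_eq_mod colinearD f) (use v in \<open>simp add: coinv_iff_eq_mod\<close>)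
  also have "\<dots> = sw \<Delta> h (\<lambda>x y. sw \<Delta> x (\<lambda>x1 x2. fsum [(f x1 * v y, x2)]))"
    by (simp add: fsum_tmult sw_def o_def case_prod_beta')
  also have "eq_mod RT \<dots> (sw \<Delta> h (\<lambda>x1 z. sw \<Delta> z (\<lambda>x2 y. fsum [(f x1 * v y, x2)])))"
    by (rule eq_mod_coassoc[OF submodule_RT])
      (intro trilin_modI bilin_modI lin_modI tensor_lin_modI f v linI algebra_facts_A)+
  also have "eq_mod RT \<dots> (sw \<Delta> h (\<lambda>x1 z. sw \<Delta> z (\<lambda>c y. fsum [(f x1 * v c, y)])))"
    by (rule eq_mod_sw[OF submodule_RT], rule eq_mod_cocomm[OF submodule_RT])
      (intro trilin_modI bilin_modI lin_modI tensor_lin_modI f v linI algebra_facts_A)+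
  also have "eq_mod RT \<dots> (sw \<Delta> h (\<lambda>x y. sw \<Delta> x (\<lambda>a c. fsum [(f a * v c, y)])))"
    by (rule eq_mod_sym[OF submodule_RT], rule eq_mod_coassoc[OF submodule_RT])
      (intro trilin_modI bilin_modI lin_modI tensor_lin_modI f v linI algebra_facts_A)+
  also have "eq_mod RT \<dots> (sw \<Delta> h (\<lambda>x y. fsum [(conv \<Delta> f v x, y)]))"
    unfolding conv_sw by (rule eq_mod_sw[OF submodule_RT], rule eq_mod_sym[OF submodule_RT], rule fsum_sw_left)
  also have "\<dots> = fsum (map (\<lambda>(x, y). (conv \<Delta> f v x, y)) (\<Delta> h))"
    by (simp add: fsum_map2 sw_def)
  finally show "eq_mod RT (fsum (\<rho> (conv \<Delta> f v h))) (fsum (map (\<lambda>(x, y). (conv \<Delta> f v x, y)) (\<Delta> h)))" .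
qed

lemma anticolinear_comp_antipode:
  assumes f: "lin sH sA f" "colinear sA sH \<rho> \<Delta> f"
  shows "anticolinear (\<lambda>h. f (S h))"
  unfolding anticolinear_def teq2_eq_mod
proof
  fix h
  note tr[trans] = eq_mod_trans[OF submodule_RT]
  have "eq_mod RT (fsum (\<rho> (f (S h)))) (fsum (map (\<lambda>(x, y). (f x, y)) (\<Delta> (S h))))" by (rule colinearD[OF f(2)])
  also have "\<dots> = sw \<Delta> (S h) (\<lambda>x y. fsum [(f x, y)])" by (simp add: fsum_map2 sw_def)
  also have "eq_mod RT \<dots> (sw \<Delta> h (\<lambda>a b. fsum [(f (S b), S a)]))"
    by (rule sw_antipode_anticomult[OF submodule_RT]) (intro trilin_modI bilin_modI lin_modI tensor_lin_modI f linI algebra_facts_A)+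
  also have "\<dots> = fsum (map (\<lambda>(x, y). (f (S y), S x)) (\<Delta> h))" by (simp add: fsum_map2 sw_def)
  finally show "eq_mod RT (fsum (\<rho> (f (S h)))) (fsum (map (\<lambda>(x, y). (f (S y), S x)) (\<Delta> h)))" .
qed

lemma lin_t: "lin sH sA t" using t_lin by (simp add: HomHA_def lin_of_hom)
lemma lin_u: "lin sH sA u" using u_lin by (simp add: HomHA_def lin_of_hom)
lemma HomHA_imp_lin: "f \<in> HomHA sH sA \<Longrightarrow> lin sH sA f" by (simp add: HomHA_def lin_of_hom)
lemma lin_imp_HomHA: "lin sH sA f \<Longrightarrow> f \<in> HomHA sH sA"
  by (simp add: HomHA_def module_hom_iff lin_def module_H module_A)

lemma conv_lin: "lin sH sA f \<Longrightarrow> lin sH sA g \<Longrightarrow> lin sH sA (conv \<Delta> f g)"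
  unfolding conv_sw by (intro linI algebra_facts_A) (auto intro!: linI algebra_facts_A)

lemma conv_assoc:
  assumes "lin sH sA f" "lin sH sA g" "lin sH sA k"
  shows "conv \<Delta> (conv \<Delta> f g) k = conv \<Delta> f (conv \<Delta> g k)"
proof
  fix h
  have "conv \<Delta> (conv \<Delta> f g) k h = sw \<Delta> h (\<lambda>x y. sw \<Delta> x (\<lambda>a b. f a * g b * k y))"
    by (simp add: conv_sw sw_mult_const)
  also have "\<dots> = sw \<Delta> h (\<lambda>a z. sw \<Delta> z (\<lambda>b y. f a * g b * k y))"
    by (rule sw_coassoc_eq) (use assms in \<open>auto intro!: linI algebra_facts_A\<close>)
  also have "\<dots> = conv \<Delta> f (conv \<Delta> g k) h"
    by (simp add: conv_sw sw_const_mult mult.assoc)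
  finally show "conv \<Delta> (conv \<Delta> f g) k h = conv \<Delta> f (conv \<Delta> g k) h" .
qed

lemma conv_unitL: "lin sH sA f \<Longrightarrow> conv \<Delta> (cunit sA \<epsilon>) f = f"
proof
  fix h assume f: "lin sH sA f"
  have "conv \<Delta> (cunit sA \<epsilon>) f h = sw \<Delta> h (\<lambda>a b. sA (\<epsilon> a) (f b))"
    by (simp add: conv_sw cunit_def k_algebra_scale_one_mult[OF k_algebra_A])
  also have "\<dots> = f h" by (rule sw_counitL_eq) (use f in \<open>auto intro!: algebra_facts_A\<close>)
  finally show "conv \<Delta> (cunit sA \<epsilon>) f h = f h" .
qed

lemma conv_unitR: "lin sH sA f \<Longrightarrow> conv \<Delta> f (cunit sA \<epsilon>) = f"
proof
  fix h assume f: "lin sH sA f"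
  have "conv \<Delta> f (cunit sA \<epsilon>) h = sw \<Delta> h (\<lambda>a b. sA (\<epsilon> b) (f a))"
    by (simp add: conv_sw cunit_def k_algebra_mult_scale_one[OF k_algebra_A])
  also have "\<dots> = f h" by (rule sw_counitR_eq) (use f in \<open>auto intro!: algebra_facts_A\<close>)
  finally show "conv \<Delta> f (cunit sA \<epsilon>) h = f h" .
qed

lemma lin_cunit: "lin sH sA (cunit sA \<epsilon>)"
  unfolding cunit_def by (rule lin_scalar_arg) (auto intro!: linI algebra_facts_A lin_of_hom counit_lin)

lemma conv_conv_inverse:
  assumes lin: "lin sH sA f" "lin sH sA f'" "lin sH sA g" "lin sH sA g'"
    and f: "conv \<Delta> f f' = cunit sA \<epsilon>" and g: "conv \<Delta> g g' = cunit sA \<epsilon>"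
  shows "conv \<Delta> (conv \<Delta> f g) (conv \<Delta> g' f') = cunit sA \<epsilon>"
proof -
  have "conv \<Delta> (conv \<Delta> f g) (conv \<Delta> g' f') = conv \<Delta> f (conv \<Delta> (conv \<Delta> g g') f')"
    using lin by (simp add: conv_assoc conv_lin)
  also have "\<dots> = cunit sA \<epsilon>" using lin f g by (simp add: conv_unitL)
  finally show ?thesis .
qed

abbreviation "e \<equiv> cunit sA \<epsilon>"
abbreviation "\<Omega> \<equiv> OmegaA sH \<Delta> sA \<rho>"

lemma sw_antipode_comult_eq: "module sR \<Longrightarrow> (\<And>n. lin sH sR (\<lambda>m. \<phi> m n)) \<Longrightarrow> (\<And>m. lin sH sR (\<phi> m)) \<Longrightarrow>
   sw \<Delta> (S h) \<phi> = sw \<Delta> h (\<lambda>a b. \<phi> (S a) (S b))"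
  using sw_antipode_comult[OF submodule_zero, of sR \<phi> h] by (simp add: bilin_mod_zero_iff eq_mod_zero)

lemma conv_antipode: "lin sH sA f \<Longrightarrow> lin sH sA g \<Longrightarrow> conv \<Delta> g f (S h) = conv \<Delta> (\<lambda>x. g (S x)) (\<lambda>x. f (S x)) h"
  unfolding conv_sw by (rule sw_antipode_comult_eq) (auto intro!: linI algebra_facts_A)

lemma OmegaA_lin: "\<omega> \<in> \<Omega> \<Longrightarrow> lin sH sA \<omega>" by (simp add: OmegaA_def HomHA_imp_lin)
lemma OmegaA_one: "\<omega> \<in> \<Omega> \<Longrightarrow> \<omega> 1 = 1" by (simp add: OmegaA_def)
lemma OmegaA_mult: "\<omega> \<in> \<Omega> \<Longrightarrow> \<omega> (x * y) = \<omega> x * \<omega> y" by (simp add: OmegaA_def)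
lemma OmegaA_colinear: "\<omega> \<in> \<Omega> \<Longrightarrow> colinear sA sH \<rho> \<Delta> \<omega>" by (simp add: OmegaA_def)
lemma OmegaA_antipode_lin: "\<omega> \<in> \<Omega> \<Longrightarrow> lin sH sA (\<lambda>h. \<omega> (S h))"
proof -
  assume w: "\<omega> \<in> \<Omega>" show ?thesis by (rule lin_comp[OF OmegaA_lin[OF w] lin_antipode[OF lin_id]])
qed
lemma OmegaA_antipode_anticolinear: "\<omega> \<in> \<Omega> \<Longrightarrow> anticolinear (\<lambda>h. \<omega> (S h))"
  by (rule anticolinear_comp_antipode[OF OmegaA_lin OmegaA_colinear])

lemma OmegaA_conv_antipode: "\<omega> \<in> \<Omega> \<Longrightarrow> conv \<Delta> \<omega> (\<lambda>h. \<omega> (S h)) = e"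
proof
  fix h assume w: "\<omega> \<in> \<Omega>"
  have "conv \<Delta> \<omega> (\<lambda>h. \<omega> (S h)) h = sw \<Delta> h (\<lambda>a b. \<omega> (a * S b))" by (simp add: conv_sw OmegaA_mult[OF w])
  also have "\<dots> = sA (\<epsilon> h) (\<omega> 1)" by (rule sw_antipode_right_eq) (auto intro!: algebra_facts_A OmegaA_lin[OF w])
  finally show "conv \<Delta> \<omega> (\<lambda>h. \<omega> (S h)) h = e h" by (simp add: OmegaA_one[OF w] cunit_def)
qed

lemma antipode_conv_OmegaA: "\<omega> \<in> \<Omega> \<Longrightarrow> conv \<Delta> (\<lambda>h. \<omega> (S h)) \<omega> = e"
proof
  fix h assume w: "\<omega> \<in> \<Omega>"
  have "conv \<Delta> (\<lambda>h. \<omega> (S h)) \<omega> h = sw \<Delta> h (\<lambda>a b. \<omega> (S a * b))" by (simp add: conv_sw OmegaA_mult[OF w])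
  also have "\<dots> = sA (\<epsilon> h) (\<omega> 1)" by (rule sw_antipode_left_eq) (auto intro!: algebra_facts_A OmegaA_lin[OF w])
  finally show "conv \<Delta> (\<lambda>h. \<omega> (S h)) \<omega> h = e h" by (simp add: OmegaA_one[OF w] cunit_def)
qed

lemma act_sw: "act \<Delta> t u h b = sw \<Delta> h (\<lambda>x y. t x * b * u y)"
  by (simp add: act_def sw_def)

lemma act_lin_module[linI]: "lin sX sA g \<Longrightarrow> lin sX sA (\<lambda>x. act \<Delta> t u h (g x))"
  unfolding act_sw by (intro linI algebra_facts_A) (auto intro!: linI algebra_facts_A)

lemma act_lin_hopf[linI]: "lin sX sH g \<Longrightarrow> lin sX sA (\<lambda>x. act \<Delta> t u (g x) b)"
  unfolding act_sw by (intro linI algebra_facts_A) (auto intro!: linI algebra_facts_A lin_t lin_u)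

lemma act_one: "act \<Delta> t u h 1 = e h"
  using tu by (simp add: act_sw conv_sw fun_eq_iff)

lemma act_mult: "act \<Delta> t u h (a * b) = sw \<Delta> h (\<lambda>x y. act \<Delta> t u x a * act \<Delta> t u y b)"
proof -
  have "sw \<Delta> h (\<lambda>x y. act \<Delta> t u x a * act \<Delta> t u y b) = sw \<Delta> h (\<lambda>x y. sw \<Delta> x (\<lambda>p q. sw \<Delta> y (\<lambda>r s. t p * a * u q * (t r * b * u s))))"
    by (simp add: act_sw sw_mult_const sw_const_mult) (intro sw_cong; rule sw_swap)
  also have "\<dots> = sw \<Delta> h (\<lambda>p z. sw \<Delta> z (\<lambda>q y. sw \<Delta> y (\<lambda>r s. t p * a * u q * (t r * b * u s))))"
    by (rule sw_coassoc_eq) (auto intro!: linI algebra_facts_A lin_t lin_u)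
  also have "\<dots> = sw \<Delta> h (\<lambda>p z. sw \<Delta> z (\<lambda>m s. sw \<Delta> m (\<lambda>q r. t p * a * (u q * t r) * b * u s)))"
  proof (rule sw_cong)
    fix p z
    have "sw \<Delta> z (\<lambda>q y. sw \<Delta> y (\<lambda>r s. t p * a * u q * (t r * b * u s))) = sw \<Delta> z (\<lambda>m s. sw \<Delta> m (\<lambda>q r. t p * a * u q * (t r * b * u s)))"
      by (rule sw_coassoc_eq[symmetric]) (auto intro!: linI algebra_facts_A lin_t lin_u)
    then show "sw \<Delta> z (\<lambda>q y. sw \<Delta> y (\<lambda>r s. t p * a * u q * (t r * b * u s))) = sw \<Delta> z (\<lambda>m s. sw \<Delta> m (\<lambda>q r. t p * a * (u q * t r) * b * u s))"
      by (simp add: mult.assoc)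
  qed
  also have "\<dots> = sw \<Delta> h (\<lambda>p z. sw \<Delta> z (\<lambda>m s. t p * a * conv \<Delta> u t m * b * u s))"
    by (simp add: conv_sw sw_const_mult sw_mult_const)
  also have "\<dots> = sw \<Delta> h (\<lambda>p z. sw \<Delta> z (\<lambda>m s. sA (\<epsilon> m) (t p * a * b * u s)))"
    by (simp add: ut cunit_def k_algebra_scale_mult_left[OF k_algebra_A] k_algebra_scale_mult_right[OF k_algebra_A] mult.assoc)
  also have "\<dots> = sw \<Delta> h (\<lambda>p z. t p * a * b * u z)"
    by (intro sw_cong sw_counitL_eq) (auto intro!: linI algebra_facts_A lin_t lin_u)
  also have "\<dots> = act \<Delta> t u h (a * b)" by (simp add: act_sw mult.assoc)
  finally show ?thesis ..
qed

lemma antipode_conv_t_coinv: "\<omega> \<in> \<Omega> \<Longrightarrow> conv \<Delta> (\<lambda>h. \<omega> (S h)) t h \<in> B"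
  by (rule conv_anticolinear_colinear_coinv[OF OmegaA_antipode_lin OmegaA_antipode_anticolinear lin_t t_colin])

text \<open>The cleaving map factors as \<open>t = \<omega> * \<gamma>\<close> with \<open>\<gamma> = (\<omega> \<circ> S) * t\<close> \<open>B\<close>-valued, and \<open>\<gamma>\<close>
  commutes with \<open>b\<close>.\<close>

lemma act_via_OmegaA:
  assumes w: "\<omega> \<in> \<Omega>" and b: "b \<in> B"
  shows "act \<Delta> t u h b = sw \<Delta> h (\<lambda>x y. \<omega> x * b * \<omega> (S y))"
proof -
  let ?g = "conv \<Delta> (\<lambda>h. \<omega> (S h)) t"
  have lg: "lin sH sA ?g" by (intro conv_lin OmegaA_antipode_lin[OF w] lin_t)
  have t_eq: "t = conv \<Delta> \<omega> ?g"
    using conv_assoc[OF OmegaA_lin[OF w] OmegaA_antipode_lin[OF w] lin_t] OmegaA_conv_antipode[OF w] conv_unitL[OF lin_t] by simp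
  have gu: "conv \<Delta> ?g u = (\<lambda>h. \<omega> (S h))"
    using conv_assoc[OF OmegaA_antipode_lin[OF w] lin_t lin_u] tu conv_unitR[OF OmegaA_antipode_lin[OF w]] by simp
  have tx: "\<And>x. t x = sw \<Delta> x (\<lambda>p q. \<omega> p * ?g q)" using t_eq conv_sw by metis
  have "act \<Delta> t u h b = sw \<Delta> h (\<lambda>x y. sw \<Delta> x (\<lambda>p q. \<omega> p * ?g q) * b * u y)"
    unfolding act_sw by (intro sw_cong) (simp only: tx)
  also have "\<dots> = sw \<Delta> h (\<lambda>x y. sw \<Delta> x (\<lambda>p q. \<omega> p * ?g q * b * u y))"
    by (simp only: sw_mult_const)
  also have "\<dots> = sw \<Delta> h (\<lambda>p z. sw \<Delta> z (\<lambda>q y. \<omega> p * ?g q * b * u y))"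
    by (rule sw_coassoc_eq) (auto intro!: linI algebra_facts_A lin_t lin_u lg OmegaA_lin[OF w])
  also have "\<dots> = sw \<Delta> h (\<lambda>p z. sw \<Delta> z (\<lambda>q y. \<omega> p * b * (?g q * u y)))"
  proof (intro sw_cong)
    fix p z q y
    have "?g q * b = b * ?g q" using Bcomm antipode_conv_t_coinv[OF w] b by blast
    then show "\<omega> p * ?g q * b * u y = \<omega> p * b * (?g q * u y)" by (simp add: mult.assoc)
  qed
  also have "\<dots> = sw \<Delta> h (\<lambda>p z. \<omega> p * b * \<omega> (S z))"
  proof (intro sw_cong)
    fix p z
    have "sw \<Delta> z (\<lambda>q y. ?g q * u y) = \<omega> (S z)" using gu conv_sw by metis
    then show "sw \<Delta> z (\<lambda>q y. \<omega> p * b * (?g q * u y)) = \<omega> p * b * \<omega> (S z)"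
      by (simp add: sw_const_mult[symmetric])
  qed
  finally show ?thesis .
qed

lemma act_coinv: "\<omega> \<in> \<Omega> \<Longrightarrow> b \<in> B \<Longrightarrow> act \<Delta> t u h b \<in> B"
proof -
  assume w: "\<omega> \<in> \<Omega>" and b: "b \<in> B"
  have ac: "anticolinear (\<lambda>y. b * \<omega> (S y))"
    unfolding anticolinear_def teq2_eq_mod
  proof
    fix h
    have "eq_mod RT (fsum (\<rho> (b * \<omega> (S h)))) (fsum (tmult [(b, 1)] (map (\<lambda>(x, y). (\<omega> (S y), S x)) (\<Delta> h))))"
      by (rule rho_mult_eq_mod) (use b OmegaA_antipode_anticolinear[OF w] in \<open>auto simp: coinv_iff_eq_mod anticolinear_def teq2_eq_mod\<close>)
    then show "eq_mod RT (fsum (\<rho> (b * \<omega> (S h)))) (fsum (map (\<lambda>(x, y). (b * \<omega> (S y), S x)) (\<Delta> h)))"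
      by (simp add: tmult_def o_def case_prod_beta')
  qed
  have "conv \<Delta> \<omega> (\<lambda>y. b * \<omega> (S y)) h \<in> B"
    by (rule conv_colinear_anticolinear_coinv[OF OmegaA_lin[OF w] OmegaA_colinear[OF w] _ ac]) (intro linI algebra_facts_A OmegaA_antipode_lin[OF w])
  then show ?thesis using act_via_OmegaA[OF w b, of h] by (simp add: conv_sw mult.assoc)
qed

subsection \<open>Cocycles\<close>

abbreviation "Z \<equiv> Z1 sH \<Delta> \<epsilon> sA \<rho> t u"
abbreviation "HB \<equiv> HomHB sH sA \<rho>"

lemma HomHB_lin: "f \<in> HB \<Longrightarrow> lin sH sA f" by (simp add: HomHB_def HomHA_imp_lin)
lemma HomHB_coinv: "f \<in> HB \<Longrightarrow> f h \<in> B" by (simp add: HomHB_def)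
lemma HomHBI: "lin sH sA f \<Longrightarrow> (\<And>h. f h \<in> B) \<Longrightarrow> f \<in> HB" by (simp add: HomHB_def lin_imp_HomHA)

lemma Z1_HomHB: "v \<in> Z \<Longrightarrow> v \<in> HB" by (simp add: Z1_def)
lemma Z1_lin: "v \<in> Z \<Longrightarrow> lin sH sA v" by (simp add: Z1_def HomHB_lin)
lemma Z1_coinv: "v \<in> Z \<Longrightarrow> v h \<in> B" by (simp add: Z1_def HomHB_coinv)
lemma Z1_invertible: "v \<in> Z \<Longrightarrow> \<exists>w \<in> HB. conv \<Delta> v w = e \<and> conv \<Delta> w v = e" by (simp add: Z1_def)
lemma Z1_cocycle: "v \<in> Z \<Longrightarrow> v (h * k) = sw \<Delta> h (\<lambda>x y. act \<Delta> t u x (v k) * v y)"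
  by (simp add: Z1_def sw_def)
lemma Z1I: "lin sH sA v \<Longrightarrow> (\<And>h. v h \<in> B) \<Longrightarrow> w \<in> HB \<Longrightarrow> conv \<Delta> v w = e \<Longrightarrow> conv \<Delta> w v = e \<Longrightarrow>
   (\<And>h k. v (h * k) = sw \<Delta> h (\<lambda>x y. act \<Delta> t u x (v k) * v y)) \<Longrightarrow> v \<in> Z"
  unfolding Z1_def by (auto simp: sw_def intro!: HomHBI)

lemma conv_one: "lin sH sA f \<Longrightarrow> lin sH sA g \<Longrightarrow> conv \<Delta> f g 1 = f 1 * g 1"
  unfolding conv_sw by (rule sw_one_eq) (auto intro!: linI algebra_facts_A)

lemma cunit_one: "e 1 = 1" by (simp add: cunit_def counit_one module.scale_one[OF module_A])

lemma t_one_u_one: "t 1 * u 1 = 1" using conv_one[OF lin_t lin_u] tu cunit_one by simp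
lemma u_one_t_one: "u 1 * t 1 = 1" using conv_one[OF lin_u lin_t] ut cunit_one by simp

lemma act_at_one: "act \<Delta> t u 1 b = t 1 * b * u 1"
  unfolding act_sw by (rule sw_one_eq) (auto intro!: linI algebra_facts_A lin_t lin_u)

lemma Z1_one: assumes v: "v \<in> Z" shows "v 1 = 1"
proof -
  obtain w where w: "w \<in> HB" "conv \<Delta> v w = e" using Z1_invertible[OF v] by blast
  have vw: "v 1 * w 1 = 1" using conv_one[OF Z1_lin[OF v] HomHB_lin[OF w(1)]] w(2) cunit_one by simp
  have "v 1 = v (1 * 1)" by simp
  also have "\<dots> = act \<Delta> t u 1 (v 1) * v 1"
    unfolding Z1_cocycle[OF v] by (rule sw_one_eq) (auto intro!: linI algebra_facts_A Z1_lin[OF v])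
  finally have "v 1 = t 1 * v 1 * u 1 * v 1" by (simp add: act_at_one)
  then have "v 1 * w 1 = t 1 * v 1 * u 1 * v 1 * w 1" by (metis arg_cong[of _ _ "\<lambda>x. x * w 1"])
  then have "v 1 * w 1 = t 1 * v 1 * u 1 * (v 1 * w 1)" by (simp add: mult.assoc)
  then have "1 = t 1 * v 1 * u 1" using vw by simp
  then have "u 1 * 1 * t 1 = u 1 * (t 1 * v 1 * u 1) * t 1" by simp
  then show ?thesis using t_one_u_one u_one_t_one by (simp add: mult.assoc) (metis mult.assoc mult_1_left)
qed

lemma sw4_pairs:
  assumes "module sR" "\<And>b c d. lin sH sR (\<lambda>a. F a b c d)" "\<And>a c d. lin sH sR (\<lambda>b. F a b c d)"
    "\<And>a b d. lin sH sR (\<lambda>c. F a b c d)" "\<And>a b c. lin sH sR (F a b c)"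
  shows "sw \<Delta> h (\<lambda>x y. sw \<Delta> x (\<lambda>p q. sw \<Delta> y (\<lambda>r s. F p q r s))) = sw4 \<Delta> h F"
  unfolding sw4_def sw3_def by (rule sw_coassoc_eq) (use assms in \<open>auto intro!: linI\<close>)

lemma act_sw_right: "act \<Delta> t u x (sw \<Delta> k \<phi>) = sw \<Delta> k (\<lambda>a b. act \<Delta> t u x (\<phi> a b))"
  by (rule lin_sw_commute[of sA sA]) (intro linI)

lemma Z1_conv_mult:
  assumes v: "v \<in> Z" and w: "w \<in> Z"
  shows "conv \<Delta> v w (h * k) = sw \<Delta> k (\<lambda>k1 k2. sw3 \<Delta> h (\<lambda>p q r. act \<Delta> t u p (v k1) * w (q * k2) * v r))"
proof -
  note lv = Z1_lin[OF v] and lw = Z1_lin[OF w]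
  have BC: "\<And>a b. a \<in> B \<Longrightarrow> b \<in> B \<Longrightarrow> a * b = b * a" using Bcomm by blast
  have "conv \<Delta> v w (h * k) = sw \<Delta> h (\<lambda>h1 h2. sw \<Delta> k (\<lambda>k1 k2. v (h1 * k1) * w (h2 * k2)))"
    unfolding conv_sw by (rule sw_mult_eq) (auto intro!: linI algebra_facts_A lv lw lin_comp[OF lv] lin_comp[OF lw])
  also have "\<dots> = sw \<Delta> h (\<lambda>h1 h2. sw \<Delta> k (\<lambda>k1 k2. sw \<Delta> h1 (\<lambda>p q. act \<Delta> t u p (v k1) * v q * w (h2 * k2))))"
    by (simp add: Z1_cocycle[OF v] sw_mult_const)
  also have "\<dots> = sw \<Delta> k (\<lambda>k1 k2. sw \<Delta> h (\<lambda>h1 h2. sw \<Delta> h1 (\<lambda>p q. act \<Delta> t u p (v k1) * v q * w (h2 * k2))))"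
    by (rule sw_swap)
  also have "\<dots> = sw \<Delta> k (\<lambda>k1 k2. sw3 \<Delta> h (\<lambda>p q r. act \<Delta> t u p (v k1) * v q * w (r * k2)))"
    by (intro sw_cong sw3_left) (auto intro!: linI algebra_facts_A lv lw lin_comp[OF lv] lin_comp[OF lw])
  also have "\<dots> = sw \<Delta> k (\<lambda>k1 k2. sw3 \<Delta> h (\<lambda>p q r. act \<Delta> t u p (v k1) * v r * w (q * k2)))"
    by (intro sw_cong sw3_swap23) (auto intro!: linI algebra_facts_A lv lw lin_comp[OF lv] lin_comp[OF lw])
  also have "\<dots> = sw \<Delta> k (\<lambda>k1 k2. sw3 \<Delta> h (\<lambda>p q r. act \<Delta> t u p (v k1) * w (q * k2) * v r))"
    by (intro sw_cong sw3_cong) (simp add: mult.assoc BC[OF Z1_coinv[OF v] Z1_coinv[OF w]])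
  finally show ?thesis .
qed

lemma Z1_conv_cocycle:
  assumes v: "v \<in> Z" and w: "w \<in> Z"
  shows "conv \<Delta> v w (h * k) = sw \<Delta> h (\<lambda>x y. act \<Delta> t u x (conv \<Delta> v w k) * conv \<Delta> v w y)"
proof -
  note lv = Z1_lin[OF v] and lw = Z1_lin[OF w]
  have BC: "\<And>a b. a \<in> B \<Longrightarrow> b \<in> B \<Longrightarrow> a * b = b * a" using Bcomm by blast
  have "sw \<Delta> h (\<lambda>x y. act \<Delta> t u x (conv \<Delta> v w k) * conv \<Delta> v w y)
      = sw \<Delta> h (\<lambda>x y. sw \<Delta> k (\<lambda>k1 k2. sw \<Delta> x (\<lambda>p q. act \<Delta> t u p (v k1) * act \<Delta> t u q (w k2))) * sw \<Delta> y (\<lambda>r s. v r * w s))"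
    by (simp add: conv_sw act_sw_right act_mult)
  also have "\<dots> = sw \<Delta> h (\<lambda>x y. sw \<Delta> k (\<lambda>k1 k2. sw \<Delta> x (\<lambda>p q. sw \<Delta> y (\<lambda>r s. act \<Delta> t u p (v k1) * act \<Delta> t u q (w k2) * (v r * w s)))))"
    by (simp only: sw_mult_const, simp only: sw_const_mult)
  also have "\<dots> = sw \<Delta> k (\<lambda>k1 k2. sw \<Delta> h (\<lambda>x y. sw \<Delta> x (\<lambda>p q. sw \<Delta> y (\<lambda>r s. act \<Delta> t u p (v k1) * act \<Delta> t u q (w k2) * (v r * w s)))))"
    by (rule sw_swap)
  also have "\<dots> = sw \<Delta> k (\<lambda>k1 k2. sw4 \<Delta> h (\<lambda>p q r s. act \<Delta> t u p (v k1) * act \<Delta> t u q (w k2) * (v r * w s)))"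
    by (intro sw_cong sw4_pairs) (auto intro!: linI algebra_facts_A lv lw lin_comp[OF lv] lin_comp[OF lw])
  also have "\<dots> = sw \<Delta> k (\<lambda>k1 k2. sw4 \<Delta> h (\<lambda>p q r s. act \<Delta> t u p (v k1) * act \<Delta> t u q (w k2) * (w s * v r)))"
    by (intro sw_cong sw4_cong) (simp add: BC[OF Z1_coinv[OF v] Z1_coinv[OF w]])
  also have "\<dots> = sw \<Delta> k (\<lambda>k1 k2. sw4 \<Delta> h (\<lambda>p q r s. act \<Delta> t u p (v k1) * act \<Delta> t u q (w k2) * (w r * v s)))"
    by (intro sw_cong sw4_swap34) (auto intro!: linI algebra_facts_A lv lw lin_comp[OF lv] lin_comp[OF lw])
  also have "\<dots> = sw \<Delta> k (\<lambda>k1 k2. sw3 \<Delta> h (\<lambda>p m s. sw \<Delta> m (\<lambda>q r. act \<Delta> t u p (v k1) * act \<Delta> t u q (w k2) * (w r * v s))))"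
    by (intro sw_cong sw4_mid[symmetric]) (auto intro!: linI algebra_facts_A lv lw lin_comp[OF lv] lin_comp[OF lw])
  also have "\<dots> = sw \<Delta> k (\<lambda>k1 k2. sw3 \<Delta> h (\<lambda>p m s. act \<Delta> t u p (v k1) * w (m * k2) * v s))"
  proof (intro sw_cong sw3_cong)
    fix k1 k2 p m s
    have "sw \<Delta> m (\<lambda>q r. act \<Delta> t u p (v k1) * act \<Delta> t u q (w k2) * (w r * v s))
       = act \<Delta> t u p (v k1) * sw \<Delta> m (\<lambda>q r. act \<Delta> t u q (w k2) * w r) * v s"
      by (simp add: sw_mult_const sw_const_mult mult.assoc)
    then show "sw \<Delta> m (\<lambda>q r. act \<Delta> t u p (v k1) * act \<Delta> t u q (w k2) * (w r * v s))
       = act \<Delta> t u p (v k1) * w (m * k2) * v s" by (simp add: Z1_cocycle[OF w])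
  qed
  finally show ?thesis using Z1_conv_mult[OF v w] by simp
qed

lemma Z1_conv_closed:
  assumes v: "v \<in> Z" and w: "w \<in> Z"
  shows "conv \<Delta> v w \<in> Z"
proof -
  note lv = Z1_lin[OF v] and lw = Z1_lin[OF w]
  obtain v' where v': "v' \<in> HB" "conv \<Delta> v v' = e" "conv \<Delta> v' v = e" using Z1_invertible[OF v] by blast
  obtain w' where w': "w' \<in> HB" "conv \<Delta> w w' = e" "conv \<Delta> w' w = e" using Z1_invertible[OF w] by blast
  note lv' = HomHB_lin[OF v'(1)] and lw' = HomHB_lin[OF w'(1)]
  show ?thesis
  proof (rule Z1I[where w="conv \<Delta> w' v'"])
    show "conv \<Delta> w' v' \<in> HB"
      by (rule HomHBI[OF conv_lin[OF lw' lv'] conv_coinv[OF HomHB_coinv[OF w'(1)] HomHB_coinv[OF v'(1)]]])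
    show "conv \<Delta> (conv \<Delta> v w) (conv \<Delta> w' v') = e"
      by (rule conv_conv_inverse[OF lv lv' lw lw' v'(2) w'(2)])
    show "conv \<Delta> (conv \<Delta> w' v') (conv \<Delta> v w) = e"
      by (rule conv_conv_inverse[OF lw' lw lv' lv w'(3) v'(3)])
  qed (use lv lw v w in \<open>auto intro: conv_lin conv_coinv Z1_coinv Z1_conv_cocycle\<close>)
qed

lemma sw_act_OmegaA:
  assumes w: "\<omega> \<in> \<Omega>" and b: "b \<in> B"
  shows "sw \<Delta> h (\<lambda>x y. act \<Delta> t u x b * \<omega> y) = \<omega> h * b"
proof -
  note lw = OmegaA_lin[OF w] and lws = OmegaA_antipode_lin[OF w]
  have "sw \<Delta> h (\<lambda>x y. act \<Delta> t u x b * \<omega> y) = sw \<Delta> h (\<lambda>x y. sw \<Delta> x (\<lambda>p q. \<omega> p * b * \<omega> (S q) * \<omega> y))"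
    by (simp add: act_via_OmegaA[OF w b] sw_mult_const)
  also have "\<dots> = sw3 \<Delta> h (\<lambda>p q y. \<omega> p * b * \<omega> (S q) * \<omega> y)"
    by (rule sw3_left) (auto intro!: linI algebra_facts_A lw lws lin_comp[OF lw])
  also have "\<dots> = sw \<Delta> h (\<lambda>p z. \<omega> p * b * conv \<Delta> (\<lambda>h. \<omega> (S h)) \<omega> z)"
    by (simp add: sw3_def conv_sw sw_const_mult mult.assoc)
  also have "\<dots> = sw \<Delta> h (\<lambda>p z. sA (\<epsilon> z) (\<omega> p * b))"
    by (simp add: antipode_conv_OmegaA[OF w] cunit_def k_algebra_mult_scale_one[OF k_algebra_A])
  also have "\<dots> = \<omega> h * b"
    by (rule sw_counitR_eq[where sR=sA]) (auto intro!: linI algebra_facts_A lw)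
  finally show ?thesis .
qed

lemma mult_OmegaA_sw_act:
  assumes w: "\<omega> \<in> \<Omega>" and b: "b \<in> B"
  shows "b * \<omega> k = sw \<Delta> k (\<lambda>x y. \<omega> x * act \<Delta> t u (S y) b)"
proof -
  note lw = OmegaA_lin[OF w] and lws = OmegaA_antipode_lin[OF w]
  have "sw \<Delta> k (\<lambda>x y. \<omega> x * act \<Delta> t u (S y) b) = sw \<Delta> k (\<lambda>x y. \<omega> x * sw \<Delta> (S y) (\<lambda>p q. \<omega> p * b * \<omega> (S q)))"
    by (simp add: act_via_OmegaA[OF w b])
  also have "\<dots> = sw \<Delta> k (\<lambda>x y. \<omega> x * sw \<Delta> y (\<lambda>p q. \<omega> (S p) * b * \<omega> (S (S q))))"
    by (intro sw_cong arg_cong[where f="\<lambda>z. _ * z"] sw_antipode_comult_eq) (auto intro!: linI algebra_facts_A lw lws lin_comp[OF lw])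
  also have "\<dots> = sw3 \<Delta> k (\<lambda>x p q. \<omega> x * \<omega> (S p) * b * \<omega> q)"
    by (simp add: sw3_def sw_const_mult antipode_involutive mult.assoc)
  also have "\<dots> = sw \<Delta> k (\<lambda>m q. sw \<Delta> m (\<lambda>x p. \<omega> x * \<omega> (S p) * b * \<omega> q))"
    by (rule sw3_left[symmetric]) (auto intro!: linI algebra_facts_A lw lws lin_comp[OF lw])
  also have "\<dots> = sw \<Delta> k (\<lambda>m q. conv \<Delta> \<omega> (\<lambda>h. \<omega> (S h)) m * (b * \<omega> q))"
    by (simp add: conv_sw sw_mult_const mult.assoc)
  also have "\<dots> = sw \<Delta> k (\<lambda>m q. sA (\<epsilon> m) (b * \<omega> q))"
    by (simp add: OmegaA_conv_antipode[OF w] cunit_def k_algebra_scale_one_mult[OF k_algebra_A])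
  also have "\<dots> = b * \<omega> k"
    by (rule sw_counitL_eq[where sR=sA]) (auto intro!: linI algebra_facts_A lw)
  finally show ?thesis ..
qed

lemma conv_Z1_OmegaA:
  assumes v: "v \<in> Z" and w: "\<omega> \<in> \<Omega>"
  shows "conv \<Delta> v \<omega> \<in> \<Omega>"
proof -
  note lv = Z1_lin[OF v] and lw = OmegaA_lin[OF w]
  have BC: "\<And>a b. a \<in> B \<Longrightarrow> b \<in> B \<Longrightarrow> a * b = b * a" using Bcomm by blast
  have mult: "conv \<Delta> v \<omega> (h * k) = conv \<Delta> v \<omega> h * conv \<Delta> v \<omega> k" for h k
  proof -
    have "conv \<Delta> v \<omega> (h * k) = sw \<Delta> h (\<lambda>h1 h2. sw \<Delta> k (\<lambda>k1 k2. v (h1 * k1) * \<omega> (h2 * k2)))"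
      unfolding conv_sw by (rule sw_mult_eq) (auto intro!: linI algebra_facts_A lv lw)
    also have "\<dots> = sw \<Delta> h (\<lambda>h1 h2. sw \<Delta> k (\<lambda>k1 k2. sw \<Delta> h1 (\<lambda>p q. act \<Delta> t u p (v k1) * v q * (\<omega> h2 * \<omega> k2))))"
      by (simp add: Z1_cocycle[OF v] OmegaA_mult[OF w] sw_mult_const)
    also have "\<dots> = sw \<Delta> k (\<lambda>k1 k2. sw \<Delta> h (\<lambda>h1 h2. sw \<Delta> h1 (\<lambda>p q. act \<Delta> t u p (v k1) * v q * (\<omega> h2 * \<omega> k2))))"
      by (rule sw_swap)
    also have "\<dots> = sw \<Delta> k (\<lambda>k1 k2. sw3 \<Delta> h (\<lambda>p q r. act \<Delta> t u p (v k1) * v q * (\<omega> r * \<omega> k2)))"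
      by (intro sw_cong sw3_left) (auto intro!: linI algebra_facts_A lv lw)
    finally have L: "conv \<Delta> v \<omega> (h * k) = sw \<Delta> k (\<lambda>k1 k2. sw3 \<Delta> h (\<lambda>p q r. act \<Delta> t u p (v k1) * v q * (\<omega> r * \<omega> k2)))" .
    have "conv \<Delta> v \<omega> h * conv \<Delta> v \<omega> k = sw \<Delta> k (\<lambda>k1 k2. sw \<Delta> h (\<lambda>h1 h2. v h1 * \<omega> h2 * (v k1 * \<omega> k2)))"
      unfolding conv_sw by (simp only: sw_const_mult, simp only: sw_mult_const)
    also have "\<dots> = sw \<Delta> k (\<lambda>k1 k2. sw \<Delta> h (\<lambda>h1 h2. v h1 * sw \<Delta> h2 (\<lambda>a b. act \<Delta> t u a (v k1) * \<omega> b) * \<omega> k2))"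
      by (simp add: sw_act_OmegaA[OF w Z1_coinv[OF v]] mult.assoc)
    also have "\<dots> = sw \<Delta> k (\<lambda>k1 k2. sw3 \<Delta> h (\<lambda>h1 a b. v h1 * act \<Delta> t u a (v k1) * \<omega> b * \<omega> k2))"
      by (simp add: sw3_def sw_mult_const sw_const_mult mult.assoc)
    also have "\<dots> = sw \<Delta> k (\<lambda>k1 k2. sw3 \<Delta> h (\<lambda>h1 a b. act \<Delta> t u a (v k1) * v h1 * \<omega> b * \<omega> k2))"
      by (intro sw_cong sw3_cong) (simp add: BC[OF Z1_coinv[OF v] act_coinv[OF w Z1_coinv[OF v]]])
    also have "\<dots> = sw \<Delta> k (\<lambda>k1 k2. sw3 \<Delta> h (\<lambda>p q r. act \<Delta> t u p (v k1) * v q * \<omega> r * \<omega> k2))"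
      by (intro sw_cong sw3_swap12) (auto intro!: linI algebra_facts_A lv lw)
    finally show ?thesis using L by (simp add: mult.assoc)
  qed
  show ?thesis unfolding OmegaA_def
    by (auto intro!: lin_imp_HomHA conv_lin lv lw mult colinear_conv_coinv_left[OF lv Z1_coinv[OF v] lw OmegaA_colinear[OF w]]
        simp: conv_one[OF lv lw] Z1_one[OF v] OmegaA_one[OF w])
qed

lemma conv_OmegaA_Z1_antipode:
  assumes z: "z \<in> Z" and w: "\<omega> \<in> \<Omega>"
  shows "conv \<Delta> \<omega> (\<lambda>h. z (S h)) \<in> \<Omega>"
proof -
  note lz = Z1_lin[OF z] and lw = OmegaA_lin[OF w]
  have lzs: "lin sH sA (\<lambda>h. z (S h))" by (rule lin_comp[OF lz lin_antipode[OF lin_id]])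
  have mult: "conv \<Delta> \<omega> (\<lambda>h. z (S h)) (h * k) = conv \<Delta> \<omega> (\<lambda>h. z (S h)) h * conv \<Delta> \<omega> (\<lambda>h. z (S h)) k" for h k
  proof -
    have inner: "sw \<Delta> n (\<lambda>y k2. act \<Delta> t u (S y) (z (S h2)) * z (S k2)) = z (S (h2 * n))" for n h2
    proof -
      have "sw \<Delta> n (\<lambda>y k2. act \<Delta> t u (S y) (z (S h2)) * z (S k2)) = sw \<Delta> (S n) (\<lambda>a b. act \<Delta> t u a (z (S h2)) * z b)"
        by (rule sw_antipode_comult_eq[symmetric]) (auto intro!: linI algebra_facts_A lz)
      also have "\<dots> = z (S n * S h2)" by (simp add: Z1_cocycle[OF z])
      finally show ?thesis by (simp add: antipode_mult)
    qed
    have "conv \<Delta> \<omega> (\<lambda>h. z (S h)) h * conv \<Delta> \<omega> (\<lambda>h. z (S h)) k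
        = sw \<Delta> k (\<lambda>k1 k2. sw \<Delta> h (\<lambda>h1 h2. \<omega> h1 * z (S h2) * (\<omega> k1 * z (S k2))))"
      unfolding conv_sw by (simp only: sw_const_mult, simp only: sw_mult_const)
    also have "\<dots> = sw \<Delta> h (\<lambda>h1 h2. sw \<Delta> k (\<lambda>k1 k2. \<omega> h1 * (z (S h2) * \<omega> k1) * z (S k2)))"
      by (subst sw_swap) (simp add: mult.assoc)
    also have "\<dots> = sw \<Delta> h (\<lambda>h1 h2. sw \<Delta> k (\<lambda>k1 k2. sw \<Delta> k1 (\<lambda>x y. \<omega> h1 * \<omega> x * act \<Delta> t u (S y) (z (S h2)) * z (S k2))))"
      by (simp add: mult_OmegaA_sw_act[OF w Z1_coinv[OF z]] sw_mult_const sw_const_mult mult.assoc)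
    also have "\<dots> = sw \<Delta> h (\<lambda>h1 h2. sw3 \<Delta> k (\<lambda>x y k2. \<omega> h1 * \<omega> x * act \<Delta> t u (S y) (z (S h2)) * z (S k2)))"
      by (intro sw_cong sw3_left) (auto intro!: linI algebra_facts_A lz lw lin_comp[OF lz] lin_comp[OF lw])
    also have "\<dots> = sw \<Delta> h (\<lambda>h1 h2. sw \<Delta> k (\<lambda>x n. \<omega> h1 * \<omega> x * sw \<Delta> n (\<lambda>y k2. act \<Delta> t u (S y) (z (S h2)) * z (S k2))))"
      by (simp add: sw3_def sw_const_mult mult.assoc)
    also have "\<dots> = sw \<Delta> h (\<lambda>h1 h2. sw \<Delta> k (\<lambda>x n. \<omega> (h1 * x) * z (S (h2 * n))))"
      by (simp add: inner OmegaA_mult[OF w])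
    also have "\<dots> = conv \<Delta> \<omega> (\<lambda>h. z (S h)) (h * k)"
      unfolding conv_sw by (rule sw_mult_eq[symmetric]) (auto intro!: linI algebra_facts_A lz lw lin_comp[OF lz])
    finally show ?thesis ..
  qed
  have B': "\<And>h. z (S h) \<in> B" by (rule Z1_coinv[OF z])
  show ?thesis unfolding OmegaA_def
    by (auto intro!: lin_imp_HomHA conv_lin lzs lw mult colinear_conv_coinv_right[OF lzs B' lw OmegaA_colinear[OF w]]
        simp: conv_one[OF lw lzs] antipode_one Z1_one[OF z] OmegaA_one[OF w])
qed

lemma conv_OmegaA_OmegaA_antipode_cocycle:
  assumes w: "\<omega> \<in> \<Omega>" and w': "\<omega>' \<in> \<Omega>"
  shows "conv \<Delta> \<omega> (\<lambda>h. \<omega>' (S h)) (h * k)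
    = sw \<Delta> h (\<lambda>x y. act \<Delta> t u x (conv \<Delta> \<omega> (\<lambda>h. \<omega>' (S h)) k) * conv \<Delta> \<omega> (\<lambda>h. \<omega>' (S h)) y)"
    (is "?c (h * k) = _")
proof -
  note lw = OmegaA_lin[OF w] and lw' = OmegaA_lin[OF w'] and lws = OmegaA_antipode_lin[OF w] and lws' = OmegaA_antipode_lin[OF w']
  have cB: "?c h \<in> B" for h
    by (rule conv_colinear_anticolinear_coinv[OF lw OmegaA_colinear[OF w] lws' OmegaA_antipode_anticolinear[OF w']])
  have "?c (h * k) = sw \<Delta> h (\<lambda>h1 h2. sw \<Delta> k (\<lambda>k1 k2. \<omega> (h1 * k1) * \<omega>' (S (h2 * k2))))"
    unfolding conv_sw by (rule sw_mult_eq) (auto intro!: linI algebra_facts_A lw lws' lin_comp[OF lw'])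
  also have "\<dots> = sw \<Delta> h (\<lambda>h1 h2. \<omega> h1 * ?c k * \<omega>' (S h2))"
    by (simp add: OmegaA_mult[OF w] OmegaA_mult[OF w'] antipode_mult conv_sw sw_const_mult sw_mult_const mult.assoc)
  finally have L: "?c (h * k) = sw \<Delta> h (\<lambda>h1 h2. \<omega> h1 * ?c k * \<omega>' (S h2))" .
  have "sw \<Delta> h (\<lambda>x y. act \<Delta> t u x (?c k) * ?c y)
     = sw \<Delta> h (\<lambda>x y. sw \<Delta> x (\<lambda>p q. sw \<Delta> y (\<lambda>r s. \<omega> p * ?c k * \<omega> (S q) * (\<omega> r * \<omega>' (S s)))))"
    by (simp only: act_via_OmegaA[OF w cB], simp only: conv_sw, simp only: sw_mult_const, simp only: sw_const_mult)
  also have "\<dots> = sw4 \<Delta> h (\<lambda>p q r s. \<omega> p * ?c k * \<omega> (S q) * (\<omega> r * \<omega>' (S s)))"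
    by (rule sw4_pairs) (auto intro!: linI algebra_facts_A lw lws lws' lin_comp[OF lw] lin_comp[OF lw'])
  also have "\<dots> = sw3 \<Delta> h (\<lambda>p m s. sw \<Delta> m (\<lambda>q r. \<omega> p * ?c k * \<omega> (S q) * (\<omega> r * \<omega>' (S s))))"
    by (rule sw4_mid[symmetric]) (auto intro!: linI algebra_facts_A lw lws lws' lin_comp[OF lw] lin_comp[OF lw'])
  also have "\<dots> = sw3 \<Delta> h (\<lambda>p m s. \<omega> p * ?c k * conv \<Delta> (\<lambda>h. \<omega> (S h)) \<omega> m * \<omega>' (S s))"
    by (intro sw3_cong) (simp add: conv_sw[of "\<lambda>h. \<omega> (S h)" \<omega>] sw_const_mult sw_mult_const mult.assoc)
  also have "\<dots> = sw3 \<Delta> h (\<lambda>p m s. sA (\<epsilon> m) (\<omega> p * ?c k * \<omega>' (S s)))"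
    by (simp add: antipode_conv_OmegaA[OF w] cunit_def k_algebra_scale_one_mult[OF k_algebra_A] k_algebra_mult_scale_one[OF k_algebra_A] k_algebra_scale_mult_left[OF k_algebra_A] k_algebra_scale_mult_right[OF k_algebra_A])
  also have "\<dots> = sw \<Delta> h (\<lambda>p y. \<omega> p * ?c k * \<omega>' (S y))"
    unfolding sw3_def by (intro sw_cong sw_counitL_eq[where sR=sA]) (auto intro!: linI algebra_facts_A lw lws' lin_comp[OF lw'])
  finally show ?thesis using L by simp
qed

lemma conv_OmegaA_OmegaA_antipode:
  assumes w: "\<omega> \<in> \<Omega>" and w': "\<omega>' \<in> \<Omega>"
  shows "conv \<Delta> \<omega> (\<lambda>h. \<omega>' (S h)) \<in> Z"
proof (rule Z1I[where w="conv \<Delta> \<omega>' (\<lambda>h. \<omega> (S h))"])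
  note lw = OmegaA_lin[OF w] and lw' = OmegaA_lin[OF w'] and lws = OmegaA_antipode_lin[OF w] and lws' = OmegaA_antipode_lin[OF w']
  show "conv \<Delta> \<omega>' (\<lambda>h. \<omega> (S h)) \<in> HB"
    by (intro HomHBI conv_lin lw' lws conv_colinear_anticolinear_coinv[OF lw' OmegaA_colinear[OF w'] lws OmegaA_antipode_anticolinear[OF w]])
  show "conv \<Delta> (conv \<Delta> \<omega> (\<lambda>h. \<omega>' (S h))) (conv \<Delta> \<omega>' (\<lambda>h. \<omega> (S h))) = e"
    by (rule conv_conv_inverse[OF lw lws lws' lw' OmegaA_conv_antipode[OF w] antipode_conv_OmegaA[OF w']])
  show "conv \<Delta> (conv \<Delta> \<omega>' (\<lambda>h. \<omega> (S h))) (conv \<Delta> \<omega> (\<lambda>h. \<omega>' (S h))) = e"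
    by (rule conv_conv_inverse[OF lw' lws' lws lw OmegaA_conv_antipode[OF w'] antipode_conv_OmegaA[OF w]])
qed (use w w' in \<open>auto intro: conv_lin OmegaA_lin OmegaA_antipode_lin conv_colinear_anticolinear_coinv
      OmegaA_colinear OmegaA_antipode_anticolinear conv_OmegaA_OmegaA_antipode_cocycle\<close>)

subsection \<open>The subcategory \<open>\<X>\<^sub>A\<close>\<close>

abbreviation "X \<equiv> XA sH \<Delta> \<epsilon> S sA \<rho> t u"
abbreviation "C \<equiv> CA sH \<Delta> S sA \<rho>"

lemma comp_antipode_antipode: "f \<circ> S \<circ> S = f" by (simp add: fun_eq_iff antipode_involutive)

lemma lin_comp_antipode: "lin sH sA f \<Longrightarrow> lin sH sA (f \<circ> S)"
  unfolding comp_def by (rule lin_comp[OF _ lin_antipode[OF lin_id]])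

lemma conv_comp_antipode: "lin sH sA f \<Longrightarrow> lin sH sA g \<Longrightarrow> conv \<Delta> g f \<circ> S = conv \<Delta> (g \<circ> S) (f \<circ> S)"
  by (simp add: fun_eq_iff conv_antipode comp_def)

lemma HomHB_comp_antipode: "f \<in> HB \<Longrightarrow> f \<circ> S \<in> HB"
  by (rule HomHBI[OF lin_comp_antipode[OF HomHB_lin]]) (simp_all add: HomHB_coinv)

lemma cunit_Z1: "e \<in> Z"
proof (rule Z1I[where w=e])
  show "lin sH sA e" by (rule lin_cunit)
  show "e h \<in> B" for h by (rule cunit_coinv)
  show "e \<in> HB" by (rule HomHBI[OF lin_cunit cunit_coinv])
  show "conv \<Delta> e e = e" by (rule conv_unitL[OF lin_cunit])
  then show "conv \<Delta> e e = e" .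
next
  fix h k
  have "sw \<Delta> h (\<lambda>x y. act \<Delta> t u x (e k) * e y) = sw \<Delta> h (\<lambda>x y. sA (\<epsilon> k) (sA (\<epsilon> y) (e x)))"
  proof (rule sw_cong)
    fix x y
    have "act \<Delta> t u x (e k) = sA (\<epsilon> k) (act \<Delta> t u x 1)"
      unfolding cunit_def using act_lin_module[OF lin_id, of x] by (simp add: lin_def)
    then show "act \<Delta> t u x (e k) * e y = sA (\<epsilon> k) (sA (\<epsilon> y) (e x))"
      by (simp add: act_one cunit_def k_algebra_scale_mult_left[OF k_algebra_A] k_algebra_scale_mult_right[OF k_algebra_A] module.scale_left_commute[OF module_A])
  qed
  also have "\<dots> = sA (\<epsilon> k) (sw \<Delta> h (\<lambda>x y. sA (\<epsilon> y) (e x)))" by (simp add: sw_scale[OF module_A])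
  also have "\<dots> = sA (\<epsilon> k) (e h)" by (subst sw_counitR_eq[OF module_A lin_cunit]) simp
  also have "\<dots> = e (h * k)" by (simp add: cunit_def counit_mult module.scale_scale[OF module_A] mult.commute)
  finally show "e (h * k) = sw \<Delta> h (\<lambda>x y. act \<Delta> t u x (e k) * e y)" ..
qed

lemma cunit_comp_antipode: "e \<circ> S = e" by (simp add: fun_eq_iff cunit_def counit_antipode)

lemma XA_subset_CA: "X i j \<subseteq> C i j"
proof (cases i; cases j)
  assume "i = One" "j = One"
  then show ?thesis by (auto simp: Z1_def HomHB_def coinv_def)
next
  assume "i = One" "j = Two"
  then show ?thesis
  proof (clarsimp)
    fix t' assume w: "t' \<in> \<Omega>"
    show "t' \<circ> S \<in> HomHA sH sA \<and> (\<forall>h. teq2 sA sH (\<rho> (t' (S h))) (map (\<lambda>(x, y). (t' (S y), S x)) (\<Delta> h)))"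
      using lin_imp_HomHA[OF lin_comp_antipode[OF OmegaA_lin[OF w]]] OmegaA_antipode_anticolinear[OF w] by (simp add: anticolinear_def)
  qed
next
  assume "i = Two" "j = One"
  then show ?thesis by (auto simp: OmegaA_def colinear_def)
next
  assume "i = Two" "j = Two"
  then show ?thesis
    by (auto simp: HomHB_def intro!: coinv_map_rho_D3 HomHA_imp_lin)
qed

lemma cunit_XA: "e \<in> X i i"
  by (cases i) (auto simp: cunit_Z1 cunit_comp_antipode intro!: HomHBI lin_cunit cunit_coinv)

lemma XA_lin: "f \<in> X i j \<Longrightarrow> lin sH sA f"
  using XA_subset_CA[of i j] by (cases i; cases j) (auto intro: HomHA_imp_lin)

lemma XA_One_Two_iff: "f \<in> X One Two \<longleftrightarrow> f \<circ> S \<in> \<Omega>"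
  by (auto simp: comp_antipode_antipode) (metis comp_antipode_antipode)

lemma XA_Two_Two_iff: "f \<in> X Two Two \<longleftrightarrow> f \<circ> S \<in> Z"
  using HomHB_comp_antipode[OF Z1_HomHB, of "f \<circ> S"] by (auto simp: comp_antipode_antipode)

lemma XA_conv_closed:
  assumes f: "f \<in> X i j" and g: "g \<in> X j l"
  shows "conv \<Delta> g f \<in> X i l"
proof -
  note XA.simps(3,4)[simp del]
  have conv_S: "conv \<Delta> g f \<circ> S = conv \<Delta> (g \<circ> S) (f \<circ> S)"
    by (rule conv_comp_antipode[OF XA_lin[OF f] XA_lin[OF g]])
  have conv_SS: "conv \<Delta> g f = conv \<Delta> g (\<lambda>h. (f \<circ> S) (S h))"
    by (simp add: antipode_involutive)
  show ?thesis
  proof (cases i; cases j; cases l)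
    assume "i = One" "j = One" "l = One"
    then show ?thesis using f g by (simp add: Z1_conv_closed)
  next
    assume "i = One" "j = One" "l = Two"
    then show ?thesis using f g conv_OmegaA_Z1_antipode[of f "g \<circ> S", folded comp_def]
      by (simp add: XA_One_Two_iff conv_S)
  next
    assume "i = One" "j = Two" "l = One"
    then show ?thesis using f g conv_OmegaA_OmegaA_antipode[of g "f \<circ> S"]
      by (simp add: XA_One_Two_iff conv_SS)
  next
    assume "i = One" "j = Two" "l = Two"
    then show ?thesis using f g conv_Z1_OmegaA[of "g \<circ> S" "f \<circ> S"]
      by (simp add: XA_One_Two_iff XA_Two_Two_iff conv_S)
  next
    assume "i = Two" "j = One" "l = One"
    then show ?thesis using f g by (simp add: conv_Z1_OmegaA)
  next
    assume "i = Two" "j = One" "l = Two"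
    then show ?thesis using f g conv_OmegaA_OmegaA_antipode[of "g \<circ> S" f, folded comp_def]
      by (simp add: XA_One_Two_iff XA_Two_Two_iff conv_S)
  next
    assume "i = Two" "j = Two" "l = One"
    then show ?thesis using f g conv_OmegaA_Z1_antipode[of "f \<circ> S" g]
      by (simp add: XA_Two_Two_iff conv_SS)
  next
    assume "i = Two" "j = Two" "l = Two"
    then show ?thesis using f g Z1_conv_closed[of "g \<circ> S" "f \<circ> S"]
      by (simp add: XA_Two_Two_iff conv_S)
  qed
qed

end

theorem theorem5p6:
  fixes sH :: "'k::comm_ring_1 \<Rightarrow> 'h::ring_1 \<Rightarrow> 'h"
    and \<Delta> :: "'h \<Rightarrow> ('h \<times> 'h) list" and \<epsilon> :: "'h \<Rightarrow> 'k" and S :: "'h \<Rightarrow> 'h"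
    and sA :: "'k \<Rightarrow> 'a::ring_1 \<Rightarrow> 'a" and \<rho> :: "'a \<Rightarrow> ('a \<times> 'h) list"
    and t u :: "'h \<Rightarrow> 'a"
  assumes hopf: "hopf_algebra sH \<Delta> \<epsilon> S"
    and cocomm: "cocommutative sH \<Delta>"
    and comod: "right_comodule_algebra sA \<rho> sH \<Delta> \<epsilon>"
    and Bcomm: "\<forall>a \<in> coinv sA sH \<rho>. \<forall>b \<in> coinv sA sH \<rho>. a * b = b * a"
    and t_lin: "t \<in> HomHA sH sA" and t_colin: "colinear sA sH \<rho> \<Delta> t"
    and u_lin: "u \<in> HomHA sH sA"
    and tu: "conv \<Delta> t u = cunit sA \<epsilon>" and ut: "conv \<Delta> u t = cunit sA \<epsilon>"
  shows "(\<forall>i j. XA sH \<Delta> \<epsilon> S sA \<rho> t u i j \<subseteq> CA sH \<Delta> S sA \<rho> i j)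
       \<and> (\<forall>i. cunit sA \<epsilon> \<in> XA sH \<Delta> \<epsilon> S sA \<rho> t u i i)
       \<and> (\<forall>i j l f g. f \<in> XA sH \<Delta> \<epsilon> S sA \<rho> t u i j \<longrightarrow> g \<in> XA sH \<Delta> \<epsilon> S sA \<rho> t u j l
            \<longrightarrow> conv \<Delta> g f \<in> XA sH \<Delta> \<epsilon> S sA \<rho> t u i l)"
proof -
  interpret cleft sH \<Delta> \<epsilon> S sA \<rho> t u
    by unfold_locales (use assms in auto)
  show ?thesis using XA_subset_CA cunit_XA XA_conv_closed by blast
qed

end
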